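(* Let $T$ be a countable tree without leaves, with root $o$, and let $P$ be a stochastic nearest neighbour transition matrix on $T$ as described in the context. Let $\lambda\in\mathrm{res}^*(P)$ and let $\nu$ be a complex distribution on $\{\partial T_x : x\in T\}$. Define $$h(x)=\int_{\partial T}K(x,\xi\mid\lambda)\,d\nu(\xi),\qquad x\in T.$$ Then $h$ is $\lambda$-harmonic, i.e. $Ph=\lambda h$, where for every $x$ the sum defining $Ph(x)$ converges absolutely. Moreover, for $x\in T$ with geodesic $\pi(o,x)=[o=x_0,x_1,\dots,x_k=x]$, $$h(x)=\sum_{i=0}^{k-1}K(x,x_i\mid\lambda)\bigl(\nu(\partial T_{x_i})-\nu(\partial T_{x_{i+1}})\bigr)+K(x,x\mid\lambda)\,\nu(\partial T_x)$$ $$=K(x,o\mid\lambda)\,\nu(\partial T)+\sum_{i=1}^{k}\bigl(K(x,x_i\mid\lambda)-K(x,x_{i-1}\mid\lambda)\bigr)\nu(\partial T_{x_i}).$$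
   Context: $T$ is a countable tree; vertices may have countably infinite degree, and no vertex has degree $1$. Write $x\sim y$ for neighbours. $P=(p(x,y))_{x,y\in T}$ is stochastic with $p(x,y)>0$ iff $x\sim y$, and $Pf(x)=\sum_y p(x,y)f(y)$, which is required to converge absolutely. A function $h:T\to\mathbb{C}$ is $\lambda$-harmonic if $Ph=\lambda h$. Spectral data: $p^{(n)}(x,y)$ is the $(x,y)$-entry of $P^n$, and $\rho=\limsup_n p^{(n)}(x,y)^{1/n}$ (independent of $x,y$). Fix the root $o$. For $x\in T$ with geodesic $[o=x_0,\dots,x_k=x]$, set $\mathsf m(x)=\prod_{i=1}^k p(x_{i-1},x_i)/p(x_i,x_{i-1})$. Then $P$ is a bounded self-adjoint operator on $\ell^2(T,\mathsf m)$ with spectrum $\mathrm{spec}(P)\subset[-\rho,\rho]$. Put $\mathrm{res}(P)=\mathbb{C}\setminus\mathrm{spec}(P)$. For $\lambda\in\mathrm{res}(P)$ define the Green function $G(x,y\mid\lambda)=\bigl((\lambda I-P)^{-1}\mathbf 1_y\bigr)(x)$; for $|\lambda|>\rho$ this equals $\sum_{n\ge0}p^{(n)}(x,y)\lambda^{-n-1}$. Let $\mathrm{res}^*(P)=\{\lambda\in\mathrm{res}(P): G(x,x\mid\lambda)\neq0\text{ for all }x\in T\}$. Boundary: an end is an equivalence class of geodesic rays, two rays being equivalent if they differ in finitely many initial vertices; $\partial T$ is the set of ends. For $x\in T$ and $w\in T\cup\partial T$, $\pi(x,w)$ is the geodesic from $x$ to $w$. The confluent $x\wedge w$ is the last common vertex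 of $\pi(o,x)$ and $\pi(o,w)$, and $|x|=d(o,x)$. For $x\ne o$, $x^-$ is the neighbour of $x$ closer to $o$. $T_x=\{w\in T: x\in\pi(o,w)\}$ with $T_o=T$, and $\partial T_x$ is the set of ends having a representative ray in $T_x$. The $\lambda$-Martin kernel is $K(x,w\mid\lambda)=G(x,x\wedge w\mid\lambda)/G(o,x\wedge w\mid\lambda)$ for $x\in T$, $w\in T\cup\partial T$. A complex distribution is a map $\nu:\{\partial T_x:x\in T\}\to\mathbb{C}$ with $\nu(\partial T_x)=\sum_{y:\,y^-=x}\nu(\partial T_y)$ for every $x$, the sum converging absolutely. Integral: call $\varphi:\partial T\to\mathbb{C}$ locally constant if there is a finite subtree $\tau\ni o$ such that, for each $x\in\tau$, $\varphi$ takes a constant value $\varphi_x$ on $\partial T_x\setminus\bigcup_{y\in S_\tau(x)}\partial T_y$, where $S_\tau(x)=\{y\in\tau:y^-=x\}$. Then $\int_{\partial T}\varphi\,d\nu=\sum_{x\in\tau}\varphi_x\bigl(\nu(\partial T_x)-\sum_{y\in S_\tau(x)}\nu(\partial T_y)\bigr)$, which does not depend on the choice of $\tau$. For fixed $x$, the function $\xi\mapsto K(x,\xi\mid\lambda)$ is locally constant. *)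

theory Defs
  imports "HOL-Analysis.Analysis"
begin

text \<open>The tree is given by a symmetric irreflexive adjacency relation E on the
whole (countable) vertex type; being a tree means: between any two vertices there
is exactly one simple path (connected and acyclic).\<close>

definition walk :: "('v \<Rightarrow> 'v \<Rightarrow> bool) \<Rightarrow> 'v list \<Rightarrow> bool" where
  "walk E xs \<longleftrightarrow> xs \<noteq> [] \<and> (\<forall>i. Suc i < length xs \<longrightarrow> E (xs!i) (xs!Suc i))"

definition is_tree :: "('v \<Rightarrow> 'v \<Rightarrow> bool) \<Rightarrow> bool" where
  "is_tree E \<longleftrightarrow> (\<forall>x y. E x y \<longrightarrow> E y x) \<and> (\<forall>x. \<not> E x x) \<and>
     (\<forall>x y. \<exists>!xs. walk E xs \<and> distinct xs \<and> hd xs = x \<and> last xs = y)"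

definition no_leaves :: "('v \<Rightarrow> 'v \<Rightarrow> bool) \<Rightarrow> bool" where
  "no_leaves E \<longleftrightarrow> (\<forall>x. \<not> (\<exists>!y. E x y))"

definition geod :: "('v \<Rightarrow> 'v \<Rightarrow> bool) \<Rightarrow> 'v \<Rightarrow> 'v \<Rightarrow> 'v list" where
  "geod E x y = (THE xs. walk E xs \<and> distinct xs \<and> hd xs = x \<and> last xs = y)"

text \<open>x^- : neighbour of x closer to the root rt (meaningful for x \<noteq> rt).\<close>
definition parent :: "('v \<Rightarrow> 'v \<Rightarrow> bool) \<Rightarrow> 'v \<Rightarrow> 'v \<Rightarrow> 'v" where
  "parent E rt y = (let xs = geod E rt y in xs ! (length xs - 2))"

definition children :: "('v \<Rightarrow> 'v \<Rightarrow> bool) \<Rightarrow> 'v \<Rightarrow> 'v \<Rightarrow> 'v set" where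
  "children E rt x = {y. y \<noteq> rt \<and> parent E rt y = x}"

definition subtree_at :: "('v \<Rightarrow> 'v \<Rightarrow> bool) \<Rightarrow> 'v \<Rightarrow> 'v \<Rightarrow> 'v set" where
  "subtree_at E rt x = {w. x \<in> set (geod E rt w)}"

definition stochastic_nn :: "('v \<Rightarrow> 'v \<Rightarrow> bool) \<Rightarrow> ('v \<Rightarrow> 'v \<Rightarrow> real) \<Rightarrow> bool" where
  "stochastic_nn E p \<longleftrightarrow> (\<forall>x y. 0 \<le> p x y) \<and> (\<forall>x y. 0 < p x y \<longleftrightarrow> E x y) \<and>
     (\<forall>x. HAS_SUM (p x) UNIV 1)"

definition Pop :: "('v \<Rightarrow> 'v \<Rightarrow> real) \<Rightarrow> ('v \<Rightarrow> complex) \<Rightarrow> 'v \<Rightarrow> complex" where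
  "Pop p f x = (\<Sum>\<^sub>\<infinity>y. complex_of_real (p x y) * f y)"

definition mweight :: "('v \<Rightarrow> 'v \<Rightarrow> bool) \<Rightarrow> ('v \<Rightarrow> 'v \<Rightarrow> real) \<Rightarrow> 'v \<Rightarrow> 'v \<Rightarrow> real" where
  "mweight E p rt x = (let xs = geod E rt x in
      \<Prod>i<length xs - 1. p (xs!i) (xs!Suc i) / p (xs!Suc i) (xs!i))"

definition l2m :: "('v \<Rightarrow> 'v \<Rightarrow> bool) \<Rightarrow> ('v \<Rightarrow> 'v \<Rightarrow> real) \<Rightarrow> 'v \<Rightarrow> ('v \<Rightarrow> complex) set" where
  "l2m E p rt = {f. (\<lambda>x. mweight E p rt x * (cmod (f x))^2) summable_on UNIV}"

definition l2norm :: "('v \<Rightarrow> 'v \<Rightarrow> bool) \<Rightarrow> ('v \<Rightarrow> 'v \<Rightarrow> real) \<Rightarrow> 'v \<Rightarrow> ('v \<Rightarrow> complex) \<Rightarrow> real" where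
  "l2norm E p rt f = sqrt (\<Sum>\<^sub>\<infinity>x. mweight E p rt x * (cmod (f x))^2)"

definition is_resolvent :: "('v \<Rightarrow> 'v \<Rightarrow> bool) \<Rightarrow> ('v \<Rightarrow> 'v \<Rightarrow> real) \<Rightarrow> 'v \<Rightarrow> complex
    \<Rightarrow> (('v \<Rightarrow> complex) \<Rightarrow> ('v \<Rightarrow> complex)) \<Rightarrow> bool" where
  "is_resolvent E p rt lam R \<longleftrightarrow>
     (\<forall>f\<in>l2m E p rt. R f \<in> l2m E p rt) \<and>
     (\<exists>C. \<forall>f\<in>l2m E p rt. l2norm E p rt (R f) \<le> C * l2norm E p rt f) \<and>
     (\<forall>f\<in>l2m E p rt. (\<lambda>x. lam * R f x - Pop p (R f) x) = f) \<and>
     (\<forall>f\<in>l2m E p rt. R (\<lambda>x. lam * f x - Pop p f x) = f)"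

definition resolvent_set :: "('v \<Rightarrow> 'v \<Rightarrow> bool) \<Rightarrow> ('v \<Rightarrow> 'v \<Rightarrow> real) \<Rightarrow> 'v \<Rightarrow> complex set" where
  "resolvent_set E p rt = {lam. \<exists>R. is_resolvent E p rt lam R}"

definition green :: "('v \<Rightarrow> 'v \<Rightarrow> bool) \<Rightarrow> ('v \<Rightarrow> 'v \<Rightarrow> real) \<Rightarrow> 'v \<Rightarrow> complex \<Rightarrow> 'v \<Rightarrow> 'v \<Rightarrow> complex" where
  "green E p rt lam x y = (SOME R. is_resolvent E p rt lam R) (\<lambda>z. if z = y then 1 else 0) x"

definition res_star :: "('v \<Rightarrow> 'v \<Rightarrow> bool) \<Rightarrow> ('v \<Rightarrow> 'v \<Rightarrow> real) \<Rightarrow> 'v \<Rightarrow> complex set" where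
  "res_star E p rt = {lam \<in> resolvent_set E p rt. \<forall>x. green E p rt lam x x \<noteq> 0}"

definition is_ray :: "('v \<Rightarrow> 'v \<Rightarrow> bool) \<Rightarrow> (nat \<Rightarrow> 'v) \<Rightarrow> bool" where
  "is_ray E r \<longleftrightarrow> inj r \<and> (\<forall>n. E (r n) (r (Suc n)))"

definition ray_equiv :: "(nat \<Rightarrow> 'v) \<Rightarrow> (nat \<Rightarrow> 'v) \<Rightarrow> bool" where
  "ray_equiv r s \<longleftrightarrow> (\<exists>i j. \<forall>n. r (i + n) = s (j + n))"

definition ends :: "('v \<Rightarrow> 'v \<Rightarrow> bool) \<Rightarrow> (nat \<Rightarrow> 'v) set set" where
  "ends E = {{s. is_ray E s \<and> ray_equiv r s} | r. is_ray E r}"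

definition bdry_at :: "('v \<Rightarrow> 'v \<Rightarrow> bool) \<Rightarrow> 'v \<Rightarrow> 'v \<Rightarrow> (nat \<Rightarrow> 'v) set set" where
  "bdry_at E rt x = {\<xi> \<in> ends E. \<exists>r\<in>\<xi>. \<forall>n. r n \<in> subtree_at E rt x}"

definition ray_from :: "'v \<Rightarrow> (nat \<Rightarrow> 'v) set \<Rightarrow> (nat \<Rightarrow> 'v)" where
  "ray_from rt \<xi> = (THE r. r \<in> \<xi> \<and> r 0 = rt)"

definition conf_with :: "('v \<Rightarrow> 'v \<Rightarrow> bool) \<Rightarrow> 'v \<Rightarrow> 'v \<Rightarrow> 'v set \<Rightarrow> 'v" where
  "conf_with E rt x S = (let xs = geod E rt x in xs ! (GREATEST i. i < length xs \<and> xs!i \<in> S))"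

definition confv :: "('v \<Rightarrow> 'v \<Rightarrow> bool) \<Rightarrow> 'v \<Rightarrow> 'v \<Rightarrow> 'v \<Rightarrow> 'v" where
  "confv E rt x w = conf_with E rt x (set (geod E rt w))"

definition confe :: "('v \<Rightarrow> 'v \<Rightarrow> bool) \<Rightarrow> 'v \<Rightarrow> 'v \<Rightarrow> (nat \<Rightarrow> 'v) set \<Rightarrow> 'v" where
  "confe E rt x \<xi> = conf_with E rt x (range (ray_from rt \<xi>))"

definition Kv :: "('v \<Rightarrow> 'v \<Rightarrow> bool) \<Rightarrow> ('v \<Rightarrow> 'v \<Rightarrow> real) \<Rightarrow> 'v \<Rightarrow> complex \<Rightarrow> 'v \<Rightarrow> 'v \<Rightarrow> complex" where
  "Kv E p rt lam x w = green E p rt lam x (confv E rt x w) / green E p rt lam rt (confv E rt x w)"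

definition Ke :: "('v \<Rightarrow> 'v \<Rightarrow> bool) \<Rightarrow> ('v \<Rightarrow> 'v \<Rightarrow> real) \<Rightarrow> 'v \<Rightarrow> complex \<Rightarrow> 'v
    \<Rightarrow> (nat \<Rightarrow> 'v) set \<Rightarrow> complex" where
  "Ke E p rt lam x \<xi> = green E p rt lam x (confe E rt x \<xi>) / green E p rt lam rt (confe E rt x \<xi>)"

definition is_cdist :: "('v \<Rightarrow> 'v \<Rightarrow> bool) \<Rightarrow> 'v \<Rightarrow> ((nat \<Rightarrow> 'v) set set \<Rightarrow> complex) \<Rightarrow> bool" where
  "is_cdist E rt \<nu> \<longleftrightarrow> (\<forall>x.
     ((\<lambda>y. norm (\<nu> (bdry_at E rt y))) summable_on (children E rt x)) \<and>
     HAS_SUM (\<lambda>y. \<nu> (bdry_at E rt y)) (children E rt x) (\<nu> (bdry_at E rt x)))"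

definition root_subtree :: "('v \<Rightarrow> 'v \<Rightarrow> bool) \<Rightarrow> 'v \<Rightarrow> 'v set \<Rightarrow> bool" where
  "root_subtree E rt \<tau> \<longleftrightarrow> finite \<tau> \<and> rt \<in> \<tau> \<and> (\<forall>x\<in>\<tau>. set (geod E rt x) \<subseteq> \<tau>)"

definition Schildren :: "('v \<Rightarrow> 'v \<Rightarrow> bool) \<Rightarrow> 'v \<Rightarrow> 'v set \<Rightarrow> 'v \<Rightarrow> 'v set" where
  "Schildren E rt \<tau> x = {y \<in> \<tau>. y \<noteq> rt \<and> parent E rt y = x}"

definition loc_const_wit :: "('v \<Rightarrow> 'v \<Rightarrow> bool) \<Rightarrow> 'v \<Rightarrow> ((nat \<Rightarrow> 'v) set \<Rightarrow> complex)
    \<Rightarrow> 'v set \<Rightarrow> ('v \<Rightarrow> complex) \<Rightarrow> bool" where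
  "loc_const_wit E rt \<phi> \<tau> c \<longleftrightarrow> root_subtree E rt \<tau> \<and>
     (\<forall>x\<in>\<tau>. \<forall>\<xi> \<in> bdry_at E rt x - (\<Union>y\<in>Schildren E rt \<tau> x. bdry_at E rt y). \<phi> \<xi> = c x)"

definition bint :: "('v \<Rightarrow> 'v \<Rightarrow> bool) \<Rightarrow> 'v \<Rightarrow> ((nat \<Rightarrow> 'v) set \<Rightarrow> complex)
    \<Rightarrow> ((nat \<Rightarrow> 'v) set set \<Rightarrow> complex) \<Rightarrow> complex" where
  "bint E rt \<phi> \<nu> = (THE v. \<exists>\<tau> c. loc_const_wit E rt \<phi> \<tau> c \<and>
      v = (\<Sum>x\<in>\<tau>. c x * (\<nu> (bdry_at E rt x) - (\<Sum>y\<in>Schildren E rt \<tau> x. \<nu> (bdry_at E rt y)))))"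

end

theory Submission
  imports Defs
begin

text \<open>
  Fix \<open>x\<close> with geodesic \<open>[o = x\<^sub>0, \<dots>, x\<^sub>k = x]\<close>. The function \<open>\<xi> \<mapsto> K(x, \<xi>)\<close> is constant on each piece
  \<open>\<partial>T\<^sub>x\<^sub>i - \<partial>T\<^sub>x\<^sub>i\<^sub>+\<^sub>1\<close>, so the integral is the finite sum along the geodesic; it does not depend on
  the chosen subtree, because adding a leaf with the value of its parent leaves the sum unchanged.
  The second formula is summation by parts.

  Harmonicity rests on two identities for the Green function. Since \<open>\<lambda>I - P\<close> is injective on
  \<open>\<ell>\<^sup>2(T, m)\<close>, \<open>G(v, y) G(x, x) = G(v, x) G(x, y)\<close> whenever \<open>x\<close> separates \<open>v\<close> from \<open>y\<close>; combined
  with the first-step equation at \<open>x\<close> this gives \<open>G(o, x) \<noteq> 0\<close> and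
  \<open>p(x, y) (K(y, y) - K(y, x)) = 1 / G(o, x)\<close> for every child \<open>y\<close> of \<open>x\<close>. Applying \<open>P\<close> at \<open>x\<close> to the
  geodesic sum, every term is \<open>\<lambda>\<close>-harmonic at \<open>x\<close> except \<open>\<nu>(\<partial>T\<^sub>x) K(\<cdot>, x)\<close>, whose defect
  \<open>\<nu>(\<partial>T\<^sub>x) / G(o, x)\<close> is cancelled by the jumps at the children, as \<open>\<nu>(\<partial>T\<^sub>x) = \<Sum>\<^sub>y \<nu>(\<partial>T\<^sub>y)\<close>.
\<close>

section \<open>Geodesics in a rooted tree\<close>

lemma walk_snoc: assumes "walk E xs" "E (last xs) y" shows "walk E (xs @ [y])"
proof -
  have "E ((xs @ [y]) ! i) ((xs @ [y]) ! Suc i)" if "Suc i < length (xs @ [y])" for i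
  proof (cases "Suc i < length xs")
    case True
    then show ?thesis using assms(1) unfolding walk_def by (simp add: nth_append)
  next
    case False
    then have "i = length xs - 1" "xs \<noteq> []" using that assms(1) unfolding walk_def by auto
    then show ?thesis using assms(2) False by (simp add: nth_append last_conv_nth)
  qed
  then show ?thesis unfolding walk_def by simp
qed

lemma walk_take: "walk E xs \<Longrightarrow> 0 < n \<Longrightarrow> walk E (take n xs)"
  unfolding walk_def by auto

lemma walk_butlast: assumes "walk E xs" "2 \<le> length xs" shows "walk E (butlast xs)"
proof -
  have "butlast xs \<noteq> []" using assms(2) by (cases xs) auto
  then show ?thesis using assms(1) unfolding walk_def by (auto simp: nth_butlast)
qed

lemma walk_nth: "walk E xs \<Longrightarrow> Suc i < length xs \<Longrightarrow> E (xs ! i) (xs ! Suc i)"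
  unfolding walk_def by auto

lemma last_take_Suc: "j < length xs \<Longrightarrow> last (take (Suc j) xs) = xs ! j"
  by (simp add: take_Suc_conv_app_nth)

locale rooted_tree =
  fixes E :: "'v \<Rightarrow> 'v \<Rightarrow> bool" and rt :: 'v
  assumes tree: "is_tree E"
begin

abbreviation "geo x \<equiv> geod E rt x"
abbreviation "par x \<equiv> parent E rt x"
abbreviation "ch x \<equiv> children E rt x"
abbreviation "sub x \<equiv> subtree_at E rt x"

lemma adj_sym: "E x y \<Longrightarrow> E y x"
  using tree unfolding is_tree_def by blast

lemma adj_irrefl: "\<not> E x x"
  using tree unfolding is_tree_def by blast

lemma unique_geodesic: "\<exists>!xs. walk E xs \<and> distinct xs \<and> hd xs = x \<and> last xs = y"
  using tree unfolding is_tree_def by blast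

lemma geod_spec: "walk E (geod E x y) \<and> distinct (geod E x y) \<and> hd (geod E x y) = x \<and> last (geod E x y) = y"
  unfolding geod_def using unique_geodesic by (rule theI')

lemma geod_unique: "walk E xs \<Longrightarrow> distinct xs \<Longrightarrow> hd xs = x \<Longrightarrow> last xs = y \<Longrightarrow> geod E x y = xs"
  using unique_geodesic geod_spec by blast

lemma geo_walk: "walk E (geo x)" using geod_spec by blast
lemma geo_distinct: "distinct (geo x)" using geod_spec by blast
lemma geo_hd: "hd (geo x) = rt" using geod_spec by blast
lemma geo_last: "last (geo x) = x" using geod_spec by blast
lemma geo_not_Nil: "geo x \<noteq> []" using geo_walk unfolding walk_def by blast
lemma length_geo_pos: "0 < length (geo x)" using geo_not_Nil by simp
lemma geo_nth_0: "geo x ! 0 = rt" using geo_hd geo_not_Nil by (simp add: hd_conv_nth)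
lemma geo_nth_last: "geo x ! (length (geo x) - 1) = x"
  using geo_last geo_not_Nil by (simp add: last_conv_nth)
lemma root_in_geo: "rt \<in> set (geo x)" using geo_hd geo_not_Nil hd_in_set by metis
lemma in_geo_self: "x \<in> set (geo x)" using geo_last geo_not_Nil last_in_set by metis

lemma geo_root: "geo rt = [rt]"
  by (rule geod_unique) (auto simp: walk_def)

lemma length_geo_eq_1_iff: "length (geo x) = 1 \<longleftrightarrow> x = rt"
proof
  assume "length (geo x) = 1"
  then obtain a where "geo x = [a]" by (metis One_nat_def length_0_conv length_Suc_conv)
  then show "x = rt" using geo_hd geo_last by (metis last_ConsL list.sel(1))
qed (simp add: geo_root)

lemma geo_nth: assumes "j < length (geo x)" shows "geo (geo x ! j) = take (Suc j) (geo x)"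
proof (rule geod_unique)
  show "walk E (take (Suc j) (geo x))" using walk_take geo_walk by blast
  show "distinct (take (Suc j) (geo x))" using geo_distinct by simp
  show "hd (take (Suc j) (geo x)) = rt" using geo_hd geo_not_Nil by (simp add: hd_take)
  show "last (take (Suc j) (geo x)) = geo x ! j" using assms by (simp add: last_take_Suc)
qed

lemma geo_parent: assumes "x \<noteq> rt"
  shows "geo x = geo (par x) @ [x]" and "E (par x) x"
proof -
  define xs where "xs = geo x"
  have l2: "2 \<le> length xs"
    using length_geo_eq_1_iff[of x] length_geo_pos[of x] assms unfolding xs_def by linarith
  have par: "par x = xs ! (length xs - 2)" unfolding parent_def Let_def xs_def by simp
  have bne: "butlast xs \<noteq> []" using l2 by (cases xs) auto
  have "geo (par x) = butlast xs"
  proof (rule geod_unique)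
    show "walk E (butlast xs)" using walk_butlast geo_walk l2 xs_def by blast
    show "distinct (butlast xs)" using geo_distinct xs_def distinct_butlast by blast
    have "hd (butlast xs) = hd xs" using bne by (cases xs) auto
    then show "hd (butlast xs) = rt" using geo_hd xs_def by simp
    show "last (butlast xs) = par x" using bne l2 par
      by (simp add: last_conv_nth nth_butlast numeral_2_eq_2)
  qed
  then show "geo x = geo (par x) @ [x]"
    using geo_last[of x] geo_not_Nil[of x] xs_def by (metis append_butlast_last_id)
  have "E (xs ! (length xs - 2)) (xs ! Suc (length xs - 2))"
    using walk_nth[OF geo_walk[of x]] l2 xs_def by simp
  moreover have "Suc (length xs - 2) = length xs - 1" using l2 by simp
  ultimately show "E (par x) x" using par geo_nth_last[of x] xs_def by simp
qed

lemma in_children_iff: "y \<in> ch x \<longleftrightarrow> y \<noteq> rt \<and> par y = x"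
  unfolding children_def by simp

lemma in_subtree_iff: "w \<in> sub z \<longleftrightarrow> z \<in> set (geo w)"
  unfolding subtree_at_def by simp

lemma parent_children: "x \<noteq> rt \<Longrightarrow> x \<in> ch (par x)"
  by (simp add: in_children_iff)

lemma geo_child: "y \<in> ch x \<Longrightarrow> geo y = geo x @ [y]"
  using geo_parent by (auto simp: in_children_iff)

lemma adj_child: "y \<in> ch x \<Longrightarrow> E x y"
  using geo_parent by (auto simp: in_children_iff)

lemma length_geo_child: "y \<in> ch x \<Longrightarrow> length (geo y) = Suc (length (geo x))"
  using geo_child by simp

lemma geo_nth_children: assumes "j < length (geo x)" "0 < j"
  shows "geo x ! j \<in> ch (geo x ! (j - 1))"
proof -
  have "geo x ! j \<noteq> geo x ! 0"
    using geo_distinct[of x] assms length_geo_pos[of x] by (simp add: nth_eq_iff_index_eq)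
  moreover have "par (geo x ! j) = geo x ! (j - 1)"
    unfolding parent_def Let_def geo_nth[OF assms(1)] using assms by simp
  ultimately show ?thesis using geo_nth_0 by (simp add: in_children_iff)
qed

lemma adj_notin_geo_child: assumes "E x y" "y \<notin> set (geo x)" shows "y \<in> ch x"
proof -
  have "geo y = geo x @ [y]"
    using walk_snoc[OF geo_walk] geo_last assms geo_distinct geo_hd geo_not_Nil
    by (intro geod_unique) auto
  moreover have "y \<noteq> rt" using assms(2) root_in_geo by blast
  ultimately show ?thesis
    unfolding in_children_iff parent_def Let_def using geo_nth_last[of x] length_geo_pos[of x]
    by (simp add: nth_append)
qed

lemma adj_in_geo_parent: assumes "E x y" "y \<in> set (geo x)" shows "x \<in> ch y"
proof -
  define xs where "xs = geo x"
  define n where "n = length xs"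
  obtain j where j: "j < n" "xs ! j = y" using assms(2) xs_def n_def by (metis in_set_conv_nth)
  have "y \<noteq> x" using assms adj_irrefl by blast
  then have jn: "j \<noteq> n - 1" using j geo_nth_last[of x] xs_def n_def by auto
  show ?thesis
  proof (cases "j = n - 2")
    case True
    have "x \<noteq> rt" using j jn geo_root xs_def n_def by auto
    moreover have "par x = y" unfolding parent_def Let_def using True j xs_def n_def by simp
    ultimately show ?thesis by (simp add: in_children_iff)
  next
    case False
    \<comment> \<open>otherwise the geodesic to \<open>y\<close> extended by \<open>x\<close> is a shorter geodesic to \<open>x\<close>\<close>
    with j jn have jl: "j + 2 < n" by linarith
    have "last (drop (Suc j) xs) = x" "drop (Suc j) xs \<noteq> []"
      using jl n_def geo_last xs_def by (auto simp: last_drop)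
    then have "x \<in> set (drop (Suc j) xs)" using last_in_set by metis
    moreover have "distinct (take (Suc j) xs @ drop (Suc j) xs)" using geo_distinct xs_def by simp
    ultimately have xnot: "x \<notin> set (take (Suc j) xs)" by (auto simp del: append_take_drop_id)
    have "geo x = take (Suc j) xs @ [x]"
    proof (rule geod_unique)
      have "walk E (take (Suc j) xs)" using walk_take[OF geo_walk[of x], of "Suc j"] xs_def by simp
      moreover have "E (last (take (Suc j) xs)) x"
        using last_take_Suc[of j xs] j n_def adj_sym assms(1) by simp
      ultimately show "walk E (take (Suc j) xs @ [x])" by (rule walk_snoc)
      show "distinct (take (Suc j) xs @ [x])" using geo_distinct xnot xs_def by auto
      show "hd (take (Suc j) xs @ [x]) = rt" using geo_hd geo_not_Nil xs_def by (simp add: hd_take)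
    qed simp
    then have "length xs = length (take (Suc j) xs @ [x])" unfolding xs_def by (rule arg_cong)
    then have "n = Suc (Suc j)" using j n_def by simp
    then show ?thesis using jl by simp
  qed
qed

lemma adj_child_cases: "E x y \<Longrightarrow> y \<in> ch x \<or> x \<in> ch y"
  using adj_notin_geo_child adj_in_geo_parent by blast

lemma child_neq: "y \<in> ch x \<Longrightarrow> y \<noteq> x"
  using length_geo_child by fastforce

lemma length_geo_mono: assumes "z \<in> set (geo x)" shows "length (geo z) \<le> length (geo x)"
proof -
  obtain j where "j < length (geo x)" "geo x ! j = z" using assms by (metis in_set_conv_nth)
  then show ?thesis using geo_nth[of j x] by simp
qed

lemma in_subtree_self: "x \<in> sub x"
  using in_geo_self by (simp add: in_subtree_iff)

lemma child_in_subtree: "y \<in> ch x \<Longrightarrow> y \<in> sub x"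
  using geo_child in_geo_self by (simp add: in_subtree_iff)

lemma parent_notin_subtree: assumes "x \<noteq> rt" shows "par x \<notin> sub x"
  using length_geo_mono length_geo_child[OF parent_children[OF assms]]
  by (fastforce simp: in_subtree_iff)

lemma root_notin_subtree: "x \<noteq> rt \<Longrightarrow> rt \<notin> sub x"
  by (simp add: in_subtree_iff geo_root)

lemma sibling_notin_subtree: assumes "y \<in> ch x" "u \<in> ch x" "u \<noteq> y" shows "y \<notin> sub u"
proof
  assume "y \<in> sub u"
  then have "u \<in> set (geo x)" using geo_child assms by (simp add: in_subtree_iff)
  then have "length (geo u) \<le> length (geo x)" by (rule length_geo_mono)
  then show False using length_geo_child[OF assms(2)] by simp
qed

lemma subtree_child_adj_closed: assumes "u \<in> ch x" "v \<in> sub u" "E v w"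
  shows "w \<in> sub u \<or> w = x"
  using adj_child_cases[OF assms(3)]
proof
  assume "w \<in> ch v"
  then show ?thesis using assms(2) geo_child by (simp add: in_subtree_iff)
next
  assume "v \<in> ch w"
  then show ?thesis using assms geo_child[of v w] by (auto simp: in_subtree_iff in_children_iff)
qed

lemma subtree_compl_adj_closed: assumes "v \<notin> sub x" "E v w"
  shows "w \<notin> sub x \<or> w = x"
  using adj_child_cases[OF assms(2)] assms(1) geo_child by (auto simp: in_subtree_iff)

lemma no_leaves_children_nonempty: assumes "\<And>x. \<exists>y. E x y" "no_leaves E" shows "ch x \<noteq> {}"
proof (cases "x = rt")
  case True
  obtain y where "E x y" using assms(1) by blast
  then have "y \<in> ch x" using adj_child_cases[of x y] True by (auto simp: in_children_iff)
  then show ?thesis by blast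
next
  case False
  have "\<not> (\<exists>!y. E x y)" using assms(2) unfolding no_leaves_def by blast
  moreover have "E x (par x)" using geo_parent[OF False] adj_sym by blast
  ultimately obtain y where "E x y" "y \<noteq> par x" by blast
  then have "y \<in> ch x" using adj_child_cases[of x y] by (auto simp: in_children_iff)
  then show ?thesis by blast
qed

end

section \<open>Ends\<close>

context rooted_tree
begin

definition descending :: "(nat \<Rightarrow> 'v) \<Rightarrow> bool" where
  "descending r \<longleftrightarrow> (\<forall>n. r (Suc n) \<in> ch (r n))"

lemma geo_descending: assumes "descending r" "r 0 = rt"
  shows "geo (r n) = map r [0..<Suc n]"
proof (induction n)
  case 0
  show ?case using assms(2) geo_root by simp
next
  case (Suc n)
  have "geo (r (Suc n)) = geo (r n) @ [r (Suc n)]"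
    using assms(1) unfolding descending_def by (blast intro: geo_child)
  also have "\<dots> = map r [0..<Suc (Suc n)]" using Suc.IH by simp
  finally show ?case .
qed

lemma descending_is_ray: assumes "descending r" "r 0 = rt" shows "is_ray E r"
proof -
  have len: "length (geo (r n)) = Suc n" for n using geo_descending[OF assms] by simp
  have "inj r"
  proof (rule injI)
    fix a b assume "r a = r b"
    then have "Suc a = Suc b" using len by metis
    then show "a = b" by simp
  qed
  moreover have "E (r n) (r (Suc n))" for n
    using assms(1) adj_child unfolding descending_def by blast
  ultimately show ?thesis unfolding is_ray_def by blast
qed

lemma ray_step_down: assumes "is_ray E s" "s (Suc n) \<in> ch (s n)"
  shows "s (Suc (Suc n)) \<in> ch (s (Suc n))"
proof -
  have "E (s (Suc n)) (s (Suc (Suc n)))" using assms(1) unfolding is_ray_def by blast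
  then have "s (Suc (Suc n)) \<in> ch (s (Suc n)) \<or> s (Suc n) \<in> ch (s (Suc (Suc n)))"
    by (rule adj_child_cases)
  moreover have "Suc (Suc n) \<noteq> n" by simp
  then have "s (Suc (Suc n)) \<noteq> s n" using assms(1) unfolding is_ray_def inj_def by blast
  ultimately show ?thesis using assms(2) by (auto simp: in_children_iff)
qed

lemma ray_descends_from: assumes "is_ray E s" "s (Suc m) \<in> ch (s m)"
  shows "s (Suc (m + k)) \<in> ch (s (m + k))"
proof (induction k)
  case 0
  then show ?case using assms(2) by simp
next
  case (Suc k)
  then show ?case using ray_step_down[OF assms(1), of "m + k"] by simp
qed

lemma ray_from_root_descending: assumes "is_ray E r" "r 0 = rt" shows "descending r"
proof -
  have "E (r 0) (r (Suc 0))" using assms(1) unfolding is_ray_def by blast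
  then have "r (Suc 0) \<in> ch (r 0) \<or> r 0 \<in> ch (r (Suc 0))" by (rule adj_child_cases)
  then have "r (Suc 0) \<in> ch (r 0)" using assms(2) by (auto simp: in_children_iff)
  then have "r (Suc (0 + n)) \<in> ch (r (0 + n))" for n by (rule ray_descends_from[OF assms(1)])
  then show ?thesis unfolding descending_def by simp
qed

lemma ray_eventually_descending: assumes "is_ray E s"
  obtains m where "\<And>k. s (Suc (m + k)) \<in> ch (s (m + k))"
proof -
  \<comment> \<open>from its vertex closest to the root on, a ray can only move away from the root\<close>
  obtain m where m: "\<And>n. length (geo (s m)) \<le> length (geo (s n))"
    using ex_has_least_nat[of "\<lambda>_. True" 0 "\<lambda>n. length (geo (s n))"] by blast
  have "E (s m) (s (Suc m))" using assms unfolding is_ray_def by blast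
  then have "s (Suc m) \<in> ch (s m) \<or> s m \<in> ch (s (Suc m))" by (rule adj_child_cases)
  moreover have "s m \<notin> ch (s (Suc m))"
  proof
    assume "s m \<in> ch (s (Suc m))"
    then have "length (geo (s m)) = Suc (length (geo (s (Suc m))))" by (rule length_geo_child)
    then show False using m[of "Suc m"] by simp
  qed
  ultimately have "s (Suc m) \<in> ch (s m)" by blast
  then show ?thesis by (rule that[OF ray_descends_from[OF assms]])
qed

lemma ray_equiv_refl: "ray_equiv r r"
  unfolding ray_equiv_def by (rule exI[of _ 0], rule exI[of _ 0]) simp

lemma ray_equiv_sym: assumes "ray_equiv r s" shows "ray_equiv s r"
proof -
  obtain i j where "\<forall>n. r (i + n) = s (j + n)" using assms unfolding ray_equiv_def by blast
  then show ?thesis unfolding ray_equiv_def by (intro exI[of _ j] exI[of _ i]) simp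
qed

lemma ray_equiv_trans: assumes "ray_equiv r s" "ray_equiv s t" shows "ray_equiv r t"
proof -
  obtain i j where ij: "\<And>n. r (i + n) = s (j + n)" using assms(1) unfolding ray_equiv_def by blast
  obtain j' k where jk: "\<And>n. s (j' + n) = t (k + n)" using assms(2) unfolding ray_equiv_def by blast
  define a where "a = max j j'"
  have "r (i + (a - j) + n) = t (k + (a - j') + n)" for n
  proof -
    have "r (i + (a - j) + n) = s (j + ((a - j) + n))" using ij by (metis add.assoc)
    also have "\<dots> = s (j' + ((a - j') + n))" unfolding a_def by (simp add: max_def)
    also have "\<dots> = t (k + (a - j') + n)" using jk by (metis add.assoc)
    finally show ?thesis .
  qed
  then show ?thesis unfolding ray_equiv_def by blast
qed

lemma end_eq_class: assumes "\<xi> \<in> ends E" "s \<in> \<xi>"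
  shows "\<xi> = {t. is_ray E t \<and> ray_equiv s t}" and "is_ray E s"
proof -
  obtain r where r: "is_ray E r" "\<xi> = {t. is_ray E t \<and> ray_equiv r t}"
    using assms(1) unfolding ends_def by blast
  then have "ray_equiv r s" "is_ray E s" using assms(2) by auto
  then show "\<xi> = {t. is_ray E t \<and> ray_equiv s t}" "is_ray E s"
    using r ray_equiv_trans ray_equiv_sym by blast+
qed

lemma end_has_root_ray: assumes "\<xi> \<in> ends E" obtains r where "r \<in> \<xi>" "r 0 = rt"
proof -
  obtain s where s: "is_ray E s" "\<xi> = {t. is_ray E t \<and> ray_equiv s t}"
    using assms unfolding ends_def by blast
  obtain m where down: "\<And>k. s (Suc (m + k)) \<in> ch (s (m + k))"
    using ray_eventually_descending[OF s(1)] by blast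
  \<comment> \<open>the geodesic to \<open>s m\<close>, continued by the tail of \<open>s\<close>\<close>
  define L where "L = length (geo (s m))"
  define r where "r n = (if n < L then geo (s m) ! n else s (m + (n - (L - 1))))" for n
  have L0: "0 < L" using length_geo_pos L_def by simp
  have last: "geo (s m) ! (L - 1) = s m" using geo_nth_last L_def by simp
  have "r (Suc n) \<in> ch (r n)" for n
  proof -
    consider "Suc n < L" | "Suc n = L" | "Suc n > L" by linarith
    then show ?thesis
    proof cases
      case 1
      then show ?thesis using geo_nth_children[of "Suc n" "s m"] unfolding r_def L_def by simp
    next
      case 2
      then show ?thesis using down[of 0] last unfolding r_def by auto
    next
      case 3
      then show ?thesis using down[of "n - (L - 1)"] unfolding r_def by (auto simp: Suc_diff_le)
    qed
  qed
  then have "descending r" unfolding descending_def by blast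
  moreover have r0: "r 0 = rt" using L0 geo_nth_0 unfolding r_def by simp
  ultimately have "is_ray E r" by (rule descending_is_ray)
  moreover have "s (m + n) = r (L - 1 + n)" for n
    using last L0 unfolding r_def by (cases n) auto
  then have "ray_equiv s r" unfolding ray_equiv_def by blast
  ultimately have "r \<in> \<xi>" using s(2) by blast
  then show ?thesis using that r0 by blast
qed

lemma root_ray_unique: assumes "\<xi> \<in> ends E" "r \<in> \<xi>" "r 0 = rt" "r' \<in> \<xi>" "r' 0 = rt"
  shows "r = r'"
proof
  have "descending r" "descending r'"
    using ray_from_root_descending end_eq_class(2) assms by blast+
  then have geo: "geo (r n) = map r [0..<Suc n]" "geo (r' n) = map r' [0..<Suc n]" for n
    using geo_descending assms(3,5) by blast+
  obtain i j where ij: "\<And>n. r (i + n) = r' (j + n)"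
    using end_eq_class(1)[OF assms(1,2)] assms(4) unfolding ray_equiv_def by blast
  have eq: "map r [0..<Suc i] = map r' [0..<Suc j]" using geo[of i] geo[of j] ij[of 0] by simp
  then have "length (map r [0..<Suc i]) = length (map r' [0..<Suc j])" by simp
  then have "i = j" by simp
  fix k
  show "r k = r' k"
  proof (cases "k \<le> i")
    case True
    then have "map r [0..<Suc i] ! k = map r' [0..<Suc j] ! k" using eq by simp
    then show ?thesis using True \<open>i = j\<close> by (simp del: upt_Suc)
  next
    case False
    then show ?thesis using ij[of "k - i"] \<open>i = j\<close> by simp
  qed
qed

lemma ray_from_spec: assumes "\<xi> \<in> ends E"
  shows "ray_from rt \<xi> \<in> \<xi>" and "ray_from rt \<xi> 0 = rt" and "descending (ray_from rt \<xi>)"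
    and "\<And>n. geo (ray_from rt \<xi> n) = map (ray_from rt \<xi>) [0..<Suc n]"
proof -
  have "\<exists>!r. r \<in> \<xi> \<and> r 0 = rt" using end_has_root_ray[OF assms] root_ray_unique[OF assms] by metis
  then have r: "ray_from rt \<xi> \<in> \<xi> \<and> ray_from rt \<xi> 0 = rt" unfolding ray_from_def by (rule theI')
  then show "ray_from rt \<xi> \<in> \<xi>" "ray_from rt \<xi> 0 = rt" by auto
  then show desc: "descending (ray_from rt \<xi>)"
    using ray_from_root_descending end_eq_class(2)[OF assms] by blast
  show "\<And>n. geo (ray_from rt \<xi> n) = map (ray_from rt \<xi>) [0..<Suc n]"
    using geo_descending[OF desc] r by blast
qed

lemma bdry_at_iff_ray_from: assumes "\<xi> \<in> ends E"
  shows "\<xi> \<in> bdry_at E rt z \<longleftrightarrow> z \<in> range (ray_from rt \<xi>)"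
proof -
  define r where "r = ray_from rt \<xi>"
  note rp = ray_from_spec[OF assms, folded r_def]
  show ?thesis unfolding r_def[symmetric]
  proof
    assume "\<xi> \<in> bdry_at E rt z"
    then obtain r' where r': "r' \<in> \<xi>" "\<And>n. r' n \<in> sub z" unfolding bdry_at_def by blast
    obtain i j where ij: "\<And>n. r (i + n) = r' (j + n)"
      using end_eq_class(1)[OF assms rp(1)] r'(1) unfolding ray_equiv_def by blast
    have "z \<in> set (geo (r' j))" using r'(2) by (simp add: in_subtree_iff)
    also have "r' j = r i" using ij[of 0] by simp
    finally show "z \<in> range r" using rp(4) by auto
  next
    assume "z \<in> range r"
    then obtain k where k: "z = r k" by blast
    define t where "t n = r (k + n)" for n
    have rr: "is_ray E r" using descending_is_ray rp by blast
    have "inj t" using rr unfolding is_ray_def t_def inj_def by (metis add_left_cancel)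
    moreover have "E (t n) (t (Suc n))" for n using rr unfolding is_ray_def t_def by simp
    ultimately have "is_ray E t" unfolding is_ray_def by blast
    moreover have "ray_equiv r t"
      unfolding ray_equiv_def t_def by (rule exI[of _ k], rule exI[of _ 0]) simp
    ultimately have "t \<in> \<xi>" using end_eq_class(1)[OF assms rp(1)] by blast
    moreover have "t n \<in> sub z" for n
      unfolding in_subtree_iff t_def k rp(4)[of "k + n"] by (simp del: upt_Suc)
    ultimately show "\<xi> \<in> bdry_at E rt z" unfolding bdry_at_def using assms by blast
  qed
qed

lemma bdry_at_ends: "\<xi> \<in> bdry_at E rt z \<Longrightarrow> \<xi> \<in> ends E"
  unfolding bdry_at_def by blast

lemma bdry_at_child: assumes "\<xi> \<in> bdry_at E rt y" "y \<in> ch x" shows "\<xi> \<in> bdry_at E rt x"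
proof -
  have e: "\<xi> \<in> ends E" using assms bdry_at_ends by blast
  define r where "r = ray_from rt \<xi>"
  note rp = ray_from_spec[OF e, folded r_def]
  obtain n where n: "y = r n" using assms bdry_at_iff_ray_from[OF e] r_def by blast
  have "y \<noteq> rt" using assms(2) by (simp add: in_children_iff)
  then have "n \<noteq> 0" using n rp(2) by (cases n) auto
  then have "r n \<in> ch (r (n - 1))" using rp(3) unfolding descending_def by (metis Suc_pred' not_gr0)
  then have "x = r (n - 1)" using n assms(2) by (simp add: in_children_iff)
  then show ?thesis using bdry_at_iff_ray_from[OF e] r_def by blast
qed

lemma bdry_at_siblings_disjoint:
  assumes "y \<in> ch x" "w \<in> ch x" "\<xi> \<in> bdry_at E rt y" "\<xi> \<in> bdry_at E rt w"
  shows "y = w"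
proof -
  have e: "\<xi> \<in> ends E" using assms bdry_at_ends by blast
  obtain a b where "y = ray_from rt \<xi> a" "w = ray_from rt \<xi> b"
    using assms bdry_at_iff_ray_from[OF e] by blast
  moreover have "length (geo y) = length (geo w)" using assms(1,2) length_geo_child by simp
  ultimately show ?thesis using ray_from_spec(4)[OF e] by simp
qed

lemma bdry_at_nonempty: assumes "\<And>x. ch x \<noteq> {}" shows "bdry_at E rt z \<noteq> {}"
proof -
  define s where "s = rec_nat z (\<lambda>_ x. SOME y. y \<in> ch x)"
  have s0: "s 0 = z" unfolding s_def by simp
  have down: "s (Suc n) \<in> ch (s n)" for n
    unfolding s_def using assms some_in_eq by (simp add: some_in_eq)
  have len: "length (geo (s n)) = length (geo z) + n" for n
    by (induction n) (auto simp: s0 length_geo_child[OF down])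
  have "z \<in> set (geo (s n))" for n
    by (induction n) (auto simp: s0 in_geo_self geo_child[OF down])
  moreover have "inj s"
  proof (rule injI)
    fix a b assume "s a = s b"
    then have "length (geo z) + a = length (geo z) + b" using len by metis
    then show "a = b" by simp
  qed
  then have "is_ray E s" unfolding is_ray_def using adj_child[OF down] by blast
  moreover define \<xi> where "\<xi> = {t. is_ray E t \<and> ray_equiv s t}"
  ultimately have "\<xi> \<in> ends E" "s \<in> \<xi>" "\<forall>n. s n \<in> sub z"
    unfolding ends_def using ray_equiv_refl by (auto simp: in_subtree_iff)
  then show ?thesis unfolding bdry_at_def by blast
qed

lemma confe_geo_nth: assumes e: "\<xi> \<in> ends E" and i: "i < length (geo x)"
  and inb: "\<xi> \<in> bdry_at E rt (geo x ! i)"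
  and nb: "Suc i < length (geo x) \<Longrightarrow> \<xi> \<notin> bdry_at E rt (geo x ! Suc i)"
  shows "confe E rt x \<xi> = geo x ! i"
proof -
  define r where "r = ray_from rt \<xi>"
  note rp = ray_from_spec[OF e, folded r_def]
  define xs where "xs = geo x"
  have prefix: "take (Suc j) xs = map r [0..<Suc j]" if jl: "j < length xs" and jr: "xs ! j \<in> range r" for j
  proof -
    obtain b where b: "xs ! j = r b" using jr by blast
    have "take (Suc j) xs = map r [0..<Suc b]" using geo_nth[of j x] rp(4)[of b] b jl xs_def by simp
    moreover have "length (take (Suc j) xs) = Suc j" using jl by simp
    ultimately show ?thesis by (metis diff_zero length_map length_upt)
  qed
  have on_ray: "xs ! j \<in> range r \<longleftrightarrow> j \<le> i" if j: "j < length xs" for j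
  proof
    have "take (Suc i) xs = map r [0..<Suc i]"
      using prefix inb bdry_at_iff_ray_from[OF e] i r_def xs_def by blast
    then have "xs ! j = r j" if "j \<le> i" for j
    proof -
      have "take (Suc i) xs ! j = map r [0..<Suc i] ! j" using \<open>take (Suc i) xs = _\<close> by simp
      then show ?thesis using that by (simp del: upt_Suc)
    qed
    then show "j \<le> i \<Longrightarrow> xs ! j \<in> range r" by simp
  next
    assume "xs ! j \<in> range r"
    show "j \<le> i"
    proof (rule ccontr)
      assume "\<not> j \<le> i"
      moreover have "take (Suc j) xs ! Suc i = map r [0..<Suc j] ! Suc i"
        using prefix[OF j \<open>xs ! j \<in> range r\<close>] by simp
      ultimately have "xs ! Suc i = r (Suc i)" by (simp del: upt_Suc)
      then show False using nb bdry_at_iff_ray_from[OF e] r_def xs_def j \<open>\<not> j \<le> i\<close> by auto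
    qed
  qed
  have "(GREATEST j. j < length xs \<and> xs ! j \<in> range r) = i"
    by (rule Greatest_equality) (use on_ray i xs_def in auto)
  then show ?thesis unfolding confe_def conf_with_def Let_def r_def xs_def by simp
qed

lemma confv_geo_nth: assumes i: "i < length (geo x)"
  shows "confv E rt x (geo x ! i) = geo x ! i"
proof -
  define xs where "xs = geo x"
  have in_prefix: "xs ! j \<in> set (take (Suc i) xs) \<longleftrightarrow> j \<le> i" if j: "j < length xs" for j
  proof
    assume "j \<le> i"
    then show "xs ! j \<in> set (take (Suc i) xs)" using j
      by (metis in_set_conv_nth length_take less_Suc_eq_le min_less_iff_conj nth_take)
  next
    assume "xs ! j \<in> set (take (Suc i) xs)"
    then obtain k where "k < length (take (Suc i) xs)" "take (Suc i) xs ! k = xs ! j"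
      by (metis in_set_conv_nth)
    then have "k \<le> i" "k < length xs" "xs ! k = xs ! j" by auto
    then show "j \<le> i" using geo_distinct[of x] j xs_def nth_eq_iff_index_eq by metis
  qed
  have "(GREATEST j. j < length xs \<and> xs ! j \<in> set (take (Suc i) xs)) = i"
    by (rule Greatest_equality) (use in_prefix i xs_def in auto)
  then show ?thesis unfolding confv_def conf_with_def Let_def geo_nth[OF i] xs_def by simp
qed

end

section \<open>Integrals of locally constant functions\<close>

locale tree_distribution = rooted_tree E rt for E :: "'v \<Rightarrow> 'v \<Rightarrow> bool" and rt +
  fixes \<nu> :: "(nat \<Rightarrow> 'v) set set \<Rightarrow> complex"
  assumes distribution: "is_cdist E rt \<nu>"
    and children_nonempty: "\<And>x. ch x \<noteq> {}"
begin

abbreviation "bd x \<equiv> bdry_at E rt x"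
abbreviation "Sch \<tau> x \<equiv> Schildren E rt \<tau> x"

definition step_sum :: "'v set \<Rightarrow> ('v \<Rightarrow> complex) \<Rightarrow> complex" where
  "step_sum \<tau> c = (\<Sum>x\<in>\<tau>. c x * (\<nu> (bd x) - (\<Sum>y\<in>Sch \<tau> x. \<nu> (bd y))))"

lemma bint_altdef: "bint E rt \<phi> \<nu> = (THE v. \<exists>\<tau> c. loc_const_wit E rt \<phi> \<tau> c \<and> v = step_sum \<tau> c)"
  unfolding bint_def step_sum_def ..

lemma Schildren_eq: "Sch \<tau> x = \<tau> \<inter> ch x"
  unfolding Schildren_def by (auto simp: in_children_iff)

lemma root_subtree_parent: "root_subtree E rt \<tau> \<Longrightarrow> z \<in> \<tau> \<Longrightarrow> z \<noteq> rt \<Longrightarrow> par z \<in> \<tau>"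
  unfolding root_subtree_def using geo_parent in_geo_self by fastforce

lemma step_sum_by_parts: assumes "root_subtree E rt \<tau>"
  shows "step_sum \<tau> c = c rt * \<nu> (bd rt) + (\<Sum>z\<in>\<tau> - {rt}. (c z - c (par z)) * \<nu> (bd z))"
proof -
  have fin: "finite \<tau>" and rt: "rt \<in> \<tau>" using assms unfolding root_subtree_def by auto
  have "(\<Sum>x\<in>\<tau>. c x * (\<Sum>y\<in>Sch \<tau> x. \<nu> (bd y)))
      = (\<Sum>x\<in>\<tau>. \<Sum>y\<in>{y \<in> \<tau> - {rt}. par y = x}. c (par y) * \<nu> (bd y))"
    unfolding Schildren_eq by (auto simp: in_children_iff sum_distrib_left intro!: sum.cong)
  also have "\<dots> = (\<Sum>y\<in>\<tau> - {rt}. c (par y) * \<nu> (bd y))"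
    by (rule sum.group) (use fin root_subtree_parent[OF assms] in auto)
  finally have "(\<Sum>x\<in>\<tau>. c x * (\<Sum>y\<in>Sch \<tau> x. \<nu> (bd y))) = (\<Sum>y\<in>\<tau> - {rt}. c (par y) * \<nu> (bd y))" .
  moreover have "(\<Sum>x\<in>\<tau>. c x * \<nu> (bd x)) = c rt * \<nu> (bd rt) + (\<Sum>x\<in>\<tau> - {rt}. c x * \<nu> (bd x))"
    using fin rt by (simp add: sum.remove)
  ultimately show ?thesis unfolding step_sum_def
    by (simp add: right_diff_distrib left_diff_distrib sum_subtractf)
qed

lemma bdry_at_child_notin_siblings:
  assumes "\<xi> \<in> bd y" "y \<in> ch x" "y \<notin> \<tau>"
  shows "\<xi> \<in> bd x - (\<Union>w\<in>Sch \<tau> x. bd w)"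
  using assms bdry_at_child bdry_at_siblings_disjoint unfolding Schildren_eq by blast

lemma loc_const_wit_insert:
  assumes w: "loc_const_wit E rt \<phi> \<tau> c" and y: "y \<notin> \<tau>" "y \<noteq> rt" "par y \<in> \<tau>"
  shows "loc_const_wit E rt \<phi> (insert y \<tau>) (c(y := c (par y)))"
    and "step_sum (insert y \<tau>) (c(y := c (par y))) = step_sum \<tau> c"
proof -
  define c' where "c' = c(y := c (par y))"
  have rs: "root_subtree E rt \<tau>" using w unfolding loc_const_wit_def by blast
  then have fin: "finite \<tau>" and rt: "rt \<in> \<tau>" and cl: "\<And>z. z \<in> \<tau> \<Longrightarrow> set (geo z) \<subseteq> \<tau>"
    unfolding root_subtree_def by auto
  have rs': "root_subtree E rt (insert y \<tau>)"
    unfolding root_subtree_def using fin rt cl geo_parent(1)[OF y(2)] cl[OF y(3)] by auto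
  have "\<phi> \<xi> = c' x" if x: "x \<in> insert y \<tau>" and \<xi>: "\<xi> \<in> bd x - (\<Union>w\<in>Sch (insert y \<tau>) x. bd w)"
    for x \<xi>
  proof (cases "x = y")
    case True
    then have "\<xi> \<in> bd (par y) - (\<Union>w\<in>Sch \<tau> (par y). bd w)"
      using \<xi> y bdry_at_child_notin_siblings parent_children by blast
    then show ?thesis using w y(3) True unfolding loc_const_wit_def c'_def by simp
  next
    case False
    have "Sch \<tau> x \<subseteq> Sch (insert y \<tau>) x" unfolding Schildren_def by blast
    then have "\<xi> \<in> bd x - (\<Union>w\<in>Sch \<tau> x. bd w)" using \<xi> by blast
    moreover have "x \<in> \<tau>" using x False by blast
    ultimately have "\<phi> \<xi> = c x" using w unfolding loc_const_wit_def by blast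
    then show ?thesis using False unfolding c'_def by simp
  qed
  then show "loc_const_wit E rt \<phi> (insert y \<tau>) c'" unfolding loc_const_wit_def using rs' by blast
  have "(\<Sum>z\<in>\<tau> - {rt}. (c' z - c' (par z)) * \<nu> (bd z)) = (\<Sum>z\<in>\<tau> - {rt}. (c z - c (par z)) * \<nu> (bd z))"
    using root_subtree_parent[OF rs] y(1) unfolding c'_def by (intro sum.cong) auto
  moreover have "insert y \<tau> - {rt} = insert y (\<tau> - {rt})" using y by auto
  ultimately show "step_sum (insert y \<tau>) c' = step_sum \<tau> c"
    unfolding step_sum_by_parts[OF rs] step_sum_by_parts[OF rs'] using fin y by (simp add: c'_def)
qed

lemma loc_const_wit_extend:
  assumes "loc_const_wit E rt \<phi> \<tau>1 c1" "root_subtree E rt \<tau>2" "\<tau>1 \<subseteq> \<tau>2"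
  shows "\<exists>c2. loc_const_wit E rt \<phi> \<tau>2 c2 \<and> step_sum \<tau>2 c2 = step_sum \<tau>1 c1"
  using assms
proof (induction "card (\<tau>2 - \<tau>1)" arbitrary: \<tau>1 c1 rule: less_induct)
  case less
  have fin2: "finite \<tau>2" using less.prems(2) unfolding root_subtree_def by auto
  have rt1: "rt \<in> \<tau>1" using less.prems(1) unfolding loc_const_wit_def root_subtree_def by blast
  show ?case
  proof (cases "\<tau>2 - \<tau>1 = {}")
    case True
    then have "\<tau>1 = \<tau>2" using less.prems(3) by blast
    then show ?thesis using less.prems(1) by blast
  next
    case False
    \<comment> \<open>a vertex of \<open>\<tau>2 - \<tau>1\<close> closest to the root has its parent in \<open>\<tau>1\<close>\<close>
    then obtain y0 where "y0 \<in> \<tau>2 - \<tau>1" by blast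
    then obtain y where y: "y \<in> \<tau>2 - \<tau>1"
      and ymin: "\<And>z. z \<in> \<tau>2 - \<tau>1 \<Longrightarrow> length (geo y) \<le> length (geo z)"
      using ex_has_least_nat[of "\<lambda>z. z \<in> \<tau>2 - \<tau>1" y0 "\<lambda>z. length (geo z)"] by blast
    have yrt: "y \<noteq> rt" using y rt1 by blast
    have "par y \<in> \<tau>2" using root_subtree_parent[OF less.prems(2)] y yrt by blast
    moreover have "length (geo y) = Suc (length (geo (par y)))"
      using length_geo_child[OF parent_children[OF yrt]] .
    ultimately have py: "par y \<in> \<tau>1" using ymin by fastforce
    have "card (\<tau>2 - insert y \<tau>1) < card (\<tau>2 - \<tau>1)"
      using y fin2 by (metis Diff_insert card_Diff1_less finite_Diff)
    then obtain c2 where "loc_const_wit E rt \<phi> \<tau>2 c2"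
      "step_sum \<tau>2 c2 = step_sum (insert y \<tau>1) (c1(y := c1 (par y)))"
      using less.hyps loc_const_wit_insert(1)[OF less.prems(1) _ yrt py] less.prems(2,3) y by blast
    then show ?thesis using loc_const_wit_insert(2)[OF less.prems(1) _ yrt py] y by auto
  qed
qed

lemma finite_children_sum: assumes "finite (ch x)"
  shows "(\<Sum>y\<in>ch x. \<nu> (bd y)) = \<nu> (bd x)"
proof -
  have "((\<lambda>y. \<nu> (bd y)) has_sum \<nu> (bd x)) (ch x)" using distribution unfolding is_cdist_def by blast
  then show ?thesis using assms has_sum_finite has_sum_unique by blast
qed

lemma children_subset_if_piece_empty: assumes "bd x - (\<Union>w\<in>Sch \<tau> x. bd w) = {}"
  shows "ch x \<subseteq> \<tau>"
proof
  fix y assume y: "y \<in> ch x"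
  obtain \<xi> where \<xi>: "\<xi> \<in> bd y" using bdry_at_nonempty[OF children_nonempty] by blast
  show "y \<in> \<tau>"
  proof (rule ccontr)
    assume "y \<notin> \<tau>"
    then have "\<xi> \<in> bd x - (\<Union>w\<in>Sch \<tau> x. bd w)" by (rule bdry_at_child_notin_siblings[OF \<xi> y])
    then show False using assms by blast
  qed
qed

lemma step_sum_loc_const_wit_unique:
  assumes w1: "loc_const_wit E rt \<phi> \<tau> c1" and w2: "loc_const_wit E rt \<phi> \<tau> c2"
  shows "step_sum \<tau> c1 = step_sum \<tau> c2"
  unfolding step_sum_def
proof (rule sum.cong)
  fix x assume x: "x \<in> \<tau>"
  show "c1 x * (\<nu> (bd x) - (\<Sum>y\<in>Sch \<tau> x. \<nu> (bd y))) = c2 x * (\<nu> (bd x) - (\<Sum>y\<in>Sch \<tau> x. \<nu> (bd y)))"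
  proof (cases "bd x - (\<Union>w\<in>Sch \<tau> x. bd w) = {}")
    case True
    \<comment> \<open>an empty piece forces all children into \<open>\<tau>\<close>, so its weight vanishes by additivity of \<open>\<nu>\<close>\<close>
    then have "Sch \<tau> x = ch x" using children_subset_if_piece_empty unfolding Schildren_eq by blast
    moreover have "finite (Sch \<tau> x)"
      using w1 unfolding loc_const_wit_def root_subtree_def Schildren_eq by blast
    ultimately show ?thesis using finite_children_sum by simp
  next
    case False
    then obtain \<xi> where "\<xi> \<in> bd x - (\<Union>w\<in>Sch \<tau> x. bd w)" by blast
    then have "\<phi> \<xi> = c1 x" "\<phi> \<xi> = c2 x" using w1 w2 x unfolding loc_const_wit_def by blast+
    then show ?thesis by simp
  qed
qed simp

lemma bint_eq_step_sum: assumes w: "loc_const_wit E rt \<phi> \<tau> c"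
  shows "bint E rt \<phi> \<nu> = step_sum \<tau> c"
  unfolding bint_altdef
proof (rule the_equality)
  show "\<exists>\<tau>' c'. loc_const_wit E rt \<phi> \<tau>' c' \<and> step_sum \<tau> c = step_sum \<tau>' c'" using w by blast
next
  fix v assume "\<exists>\<tau>' c'. loc_const_wit E rt \<phi> \<tau>' c' \<and> v = step_sum \<tau>' c'"
  then obtain \<tau>' c' where w': "loc_const_wit E rt \<phi> \<tau>' c'" and v: "v = step_sum \<tau>' c'" by blast
  \<comment> \<open>compare both sums on the common refinement \<open>\<tau> \<union> \<tau>'\<close>\<close>
  have "root_subtree E rt (\<tau> \<union> \<tau>')"
    using w w' unfolding loc_const_wit_def root_subtree_def by auto
  then obtain c1 c2 where "loc_const_wit E rt \<phi> (\<tau> \<union> \<tau>') c1" "step_sum (\<tau> \<union> \<tau>') c1 = step_sum \<tau> c"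
    and "loc_const_wit E rt \<phi> (\<tau> \<union> \<tau>') c2" "step_sum (\<tau> \<union> \<tau>') c2 = step_sum \<tau>' c'"
    using loc_const_wit_extend[OF w] loc_const_wit_extend[OF w'] by (meson Un_upper1 Un_upper2)
  then show "v = step_sum \<tau> c" using step_sum_loc_const_wit_unique v by metis
qed

lemma Schildren_geo_nth: assumes i: "i < length (geo x)"
  shows "Sch (set (geo x)) (geo x ! i) = (if Suc i < length (geo x) then {geo x ! Suc i} else {})"
proof -
  define xs where "xs = geo x"
  have "w \<in> Sch (set xs) (xs ! i) \<longleftrightarrow> Suc i < length xs \<and> w = xs ! Suc i" for w
  proof
    assume "w \<in> Sch (set xs) (xs ! i)"
    then obtain j where j: "j < length xs" "xs ! j = w" "w \<in> ch (xs ! i)"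
      unfolding Schildren_eq by (metis IntE in_set_conv_nth)
    have "w \<noteq> rt" using j(3) by (simp add: in_children_iff)
    then have "j \<noteq> 0" using j(2) geo_nth_0[of x] xs_def by (cases j) auto
    then have "w \<in> ch (xs ! (j - 1))" using geo_nth_children[of j x] j xs_def by simp
    then have "xs ! (j - 1) = xs ! i" using j(3) by (simp add: in_children_iff)
    then have "j - 1 = i" using geo_distinct[of x] j i xs_def nth_eq_iff_index_eq
      by (metis less_imp_diff_less)
    then show "Suc i < length xs \<and> w = xs ! Suc i" using j \<open>j \<noteq> 0\<close> by auto
  next
    assume "Suc i < length xs \<and> w = xs ! Suc i"
    then show "w \<in> Sch (set xs) (xs ! i)"
      using geo_nth_children[of "Suc i" x] xs_def unfolding Schildren_eq by auto
  qed
  then show ?thesis unfolding xs_def by auto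
qed

text \<open>On the piece of \<open>x\<^sub>i\<close> the confluent of \<open>x\<close> and \<open>\<xi>\<close> is \<open>x\<^sub>i\<close>.\<close>

lemma loc_const_wit_kernel_geo:
  fixes G :: "'v \<Rightarrow> 'v \<Rightarrow> complex"
  shows "loc_const_wit E rt (\<lambda>\<xi>. G x (confe E rt x \<xi>) / G rt (confe E rt x \<xi>)) (set (geo x))
           (\<lambda>z. G x (confv E rt x z) / G rt (confv E rt x z))"
proof -
  define xs where "xs = geo x"
  have "root_subtree E rt (set xs)"
    unfolding root_subtree_def xs_def
  proof (intro conjI ballI)
    fix z assume "z \<in> set (geo x)"
    then obtain j where "j < length (geo x)" "geo x ! j = z" by (metis in_set_conv_nth)
    then show "set (geo z) \<subseteq> set (geo x)" using geo_nth[of j x] by (metis set_take_subset)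
  qed (simp_all add: root_in_geo)
  moreover have "confe E rt x \<xi> = z" "confv E rt x z = z"
    if z: "z \<in> set xs" and \<xi>: "\<xi> \<in> bd z - (\<Union>w\<in>Sch (set xs) z. bd w)" for z \<xi>
  proof -
    obtain i where i: "i < length xs" "xs ! i = z" using z by (metis in_set_conv_nth)
    have e: "\<xi> \<in> ends E" using \<xi> bdry_at_ends by blast
    have "Suc i < length xs \<Longrightarrow> \<xi> \<notin> bd (xs ! Suc i)"
      using \<xi> Schildren_geo_nth[of i x] i xs_def by auto
    then show "confe E rt x \<xi> = z" using confe_geo_nth[OF e, of i x] i \<xi> xs_def by auto
    show "confv E rt x z = z" using confv_geo_nth[of i x] i xs_def by simp
  qed
  ultimately show ?thesis unfolding loc_const_wit_def xs_def by simp
qed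

lemma step_sum_geo:
  assumes "k = length (geo x) - 1"
  shows "step_sum (set (geo x)) c =
    (\<Sum>i<k. c (geo x ! i) * (\<nu> (bd (geo x ! i)) - \<nu> (bd (geo x ! Suc i)))) + c x * \<nu> (bd x)"
proof -
  define xs where "xs = geo x"
  have L: "length xs = Suc k" using assms length_geo_pos xs_def by (metis Suc_diff_1)
  have "step_sum (set xs) c
      = (\<Sum>i<length xs. c (xs ! i) * (\<nu> (bd (xs ! i)) - (\<Sum>y\<in>Sch (set xs) (xs ! i). \<nu> (bd y))))"
    unfolding step_sum_def using geo_distinct xs_def by (simp add: sum.distinct_set_conv_list sum_list_sum_nth atLeast0LessThan)
  also have "\<dots> = (\<Sum>i<Suc k. c (xs ! i) * (\<nu> (bd (xs ! i)) - (if i < k then \<nu> (bd (xs ! Suc i)) else 0)))"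
    unfolding L by (rule sum.cong) (use Schildren_geo_nth L xs_def in auto)
  also have "\<dots> = (\<Sum>i<k. c (xs ! i) * (\<nu> (bd (xs ! i)) - \<nu> (bd (xs ! Suc i)))) + c (xs ! k) * \<nu> (bd (xs ! k))"
    by simp
  also have "xs ! k = x" using geo_nth_last[of x] L xs_def by simp
  finally show ?thesis using xs_def by simp
qed

end

section \<open>The Green function\<close>

locale green_tree = rooted_tree E rt for E :: "'v \<Rightarrow> 'v \<Rightarrow> bool" and rt +
  fixes p :: "'v \<Rightarrow> 'v \<Rightarrow> real" and lam :: complex
  assumes stochastic: "stochastic_nn E p"
    and lam_res_star: "lam \<in> res_star E p rt"
begin

abbreviation "m x \<equiv> mweight E p rt x"
abbreviation "L2 \<equiv> l2m E p rt"
abbreviation "G x y \<equiv> green E p rt lam x y"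

definition resolvent :: "('v \<Rightarrow> complex) \<Rightarrow> 'v \<Rightarrow> complex" where
  "resolvent = (SOME R. is_resolvent E p rt lam R)"

definition delta :: "'v \<Rightarrow> 'v \<Rightarrow> complex" where
  "delta y z = (if z = y then 1 else 0)"

lemma p_nonneg: "0 \<le> p x y"
  using stochastic unfolding stochastic_nn_def by blast

lemma p_pos_iff: "0 < p x y \<longleftrightarrow> E x y"
  using stochastic unfolding stochastic_nn_def by blast

lemma p_eq_0: "\<not> E x y \<Longrightarrow> p x y = 0"
  using p_nonneg[of x y] p_pos_iff[of x y] by linarith

lemma p_has_sum: "(p x has_sum 1) UNIV"
  using stochastic unfolding stochastic_nn_def by blast

lemma p_le_1: "p x y \<le> 1"
proof -
  have "(p x has_sum p x y) {y}" using has_sum_finite[of "{y}" "p x"] by simp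
  then show ?thesis
    using has_sum_mono_neutral[where f = "p x" and A = "{y}" and g = "p x" and B = UNIV] p_has_sum p_nonneg
    by auto
qed

lemma exists_adj: "\<exists>y. E x y"
proof (rule ccontr)
  assume "\<nexists>y. E x y"
  then have "(p x has_sum 0) UNIV" using p_eq_0 by (simp add: has_sum_0)
  then show False using has_sum_unique p_has_sum[of x] by fastforce
qed

lemma is_resolvent_resolvent: "is_resolvent E p rt lam resolvent"
proof -
  have "\<exists>R. is_resolvent E p rt lam R"
    using lam_res_star unfolding res_star_def resolvent_set_def by blast
  then show ?thesis unfolding resolvent_def by (rule someI_ex)
qed

lemma green_eq_resolvent: "G x y = resolvent (delta y) x"
  unfolding green_def resolvent_def delta_def ..

lemma green_diag_nonzero: "G x x \<noteq> 0"
  using lam_res_star unfolding res_star_def by blast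

lemma mweight_pos: "0 < m x"
  unfolding mweight_def Let_def
  using walk_nth[OF geo_walk[of x]] p_pos_iff adj_sym by (intro prod_pos) auto

lemma mweight_child: assumes "y \<in> ch x" shows "m y = m x * (p x y / p y x)"
proof -
  define xs where "xs = geo x"
  define f where "f i = p ((xs @ [y]) ! i) ((xs @ [y]) ! Suc i) / p ((xs @ [y]) ! Suc i) ((xs @ [y]) ! i)"
    for i
  have n0: "0 < length xs" using length_geo_pos xs_def by simp
  have "m y = (\<Prod>i<length xs. f i)"
    unfolding mweight_def Let_def geo_child[OF assms] f_def xs_def by simp
  also have "\<dots> = (\<Prod>i<length xs - 1. f i) * f (length xs - 1)"
    using n0 by (metis Suc_diff_1 prod.lessThan_Suc)
  also have "(\<Prod>i<length xs - 1. f i) = m x"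
    unfolding mweight_def Let_def xs_def[symmetric] f_def by (rule prod.cong) (auto simp: nth_append)
  also have "f (length xs - 1) = p x y / p y x"
    using n0 geo_nth_last[of x] unfolding f_def xs_def by (simp add: nth_append)
  finally show ?thesis .
qed

lemma mweight_reversible: assumes "E v w" shows "m w * p w v = m v * p v w"
proof -
  have "p w v > 0" "p v w > 0" using assms adj_sym p_pos_iff by blast+
  then show ?thesis using adj_child_cases[OF assms] mweight_child by auto
qed

lemma L2_iff: "f \<in> L2 \<longleftrightarrow> (\<lambda>x. m x * (cmod (f x))\<^sup>2) summable_on UNIV"
  unfolding l2m_def by simp

lemma delta_L2: "delta y \<in> L2"
proof -
  have "(\<lambda>x. m x * (cmod (delta y x))\<^sup>2) summable_on {y}" by (rule summable_on_finite) simp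
  then show ?thesis unfolding L2_iff
    by (subst summable_on_cong_neutral[where T = "{y}" and g = "\<lambda>x. m x * (cmod (delta y x))\<^sup>2"])
      (auto simp: delta_def)
qed

lemma L2_lincomb: assumes "f \<in> L2" "g \<in> L2" shows "(\<lambda>x. a * f x + b * g x) \<in> L2"
proof -
  have "(\<lambda>x. 2 * (cmod a)\<^sup>2 * (m x * (cmod (f x))\<^sup>2) + 2 * (cmod b)\<^sup>2 * (m x * (cmod (g x))\<^sup>2))
          summable_on UNIV"
    using assms unfolding L2_iff by (intro summable_on_add summable_on_cmult_right)
  moreover have "m x * (cmod (a * f x + b * g x))\<^sup>2
      \<le> 2 * (cmod a)\<^sup>2 * (m x * (cmod (f x))\<^sup>2) + 2 * (cmod b)\<^sup>2 * (m x * (cmod (g x))\<^sup>2)" for x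
  proof -
    have "(cmod (a * f x + b * g x))\<^sup>2 \<le> (cmod a * cmod (f x) + cmod b * cmod (g x))\<^sup>2"
      by (metis norm_ge_zero norm_mult norm_triangle_ineq power_mono)
    also have "\<dots> \<le> 2 * (cmod a * cmod (f x))\<^sup>2 + 2 * (cmod b * cmod (g x))\<^sup>2"
      by (smt (verit) power2_sum sum_squares_bound)
    finally show ?thesis
      using mweight_pos[of x] mult_left_mono[of _ _ "m x"]
      by (fastforce simp: algebra_simps power_mult_distrib)
  qed
  ultimately show ?thesis unfolding L2_iff
    by (rule summable_on_comparison_test) (simp add: mweight_pos less_imp_le)
qed

lemma L2_restrict: "f \<in> L2 \<Longrightarrow> (\<lambda>x. if x \<in> B then f x else 0) \<in> L2"
  unfolding L2_iff by (erule summable_on_comparison_test) (auto simp: mweight_pos less_imp_le)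

text \<open>\<open>P\<close> acts absolutely on \<open>\<ell>\<^sup>2(T, m)\<close>: by reversibility and \<open>p \<le> 1\<close>,
  \<open>p(v,z)\<^sup>2 / m(z) \<le> p(v,z) / m(v)\<close>, and \<open>p(v,z) |g(z)| \<le> (p(v,z)\<^sup>2 / m(z) + m(z) |g(z)|\<^sup>2) / 2\<close>.\<close>

lemma L2_abs_summable_P: assumes "g \<in> L2"
  shows "(\<lambda>z. norm (complex_of_real (p v z) * g z)) summable_on UNIV"
proof -
  define bound where "bound z = (1 / (2 * m v)) * p v z + (1 / 2) * (m z * (cmod (g z))\<^sup>2)" for z
  have "p v summable_on UNIV" using p_has_sum summable_on_def by blast
  then have "bound summable_on UNIV"
    using assms unfolding bound_def L2_iff by (intro summable_on_add summable_on_cmult_right)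
  moreover have "norm (complex_of_real (p v z) * g z) \<le> bound z" for z
  proof (cases "E v z")
    case False
    then show ?thesis using p_eq_0 mweight_pos[of v] mweight_pos[of z] unfolding bound_def
      by (simp add: p_nonneg)
  next
    case True
    have mz: "0 < m z" "0 < m v" using mweight_pos by auto
    have "(p v z)\<^sup>2 / m z = p v z * (p z v / m v)"
      using mweight_reversible[OF True] mz by (simp add: field_simps power2_eq_square)
    also have "\<dots> \<le> p v z / m v"
      using p_le_1[of z v] mz p_nonneg by (simp add: divide_right_mono mult_left_le)
    finally have sq: "(p v z)\<^sup>2 / m z \<le> p v z / m v" .
    have "0 \<le> (p v z - m z * cmod (g z))\<^sup>2" by simp
    then have amgm: "p v z * cmod (g z) \<le> ((p v z)\<^sup>2 / m z + m z * (cmod (g z))\<^sup>2) / 2"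
      using mz by (simp add: field_simps power2_eq_square power2_diff)
    have "norm (complex_of_real (p v z) * g z) = p v z * cmod (g z)" by (simp add: norm_mult p_nonneg)
    also have "\<dots> \<le> ((p v z)\<^sup>2 / m z + m z * (cmod (g z))\<^sup>2) / 2" by (rule amgm)
    also have "\<dots> \<le> (p v z / m v + m z * (cmod (g z))\<^sup>2) / 2"
      by (intro divide_right_mono add_right_mono sq zero_le_numeral)
    also have "\<dots> = bound z" unfolding bound_def by (simp add: field_simps)
    finally show ?thesis .
  qed
  ultimately show ?thesis by (rule Infinite_Sum.abs_summable_on_comparison_test')
qed

lemma L2_has_sum_P: assumes "g \<in> L2"
  shows "((\<lambda>z. complex_of_real (p v z) * g z) has_sum Pop p g v) UNIV"
proof -
  have "(\<lambda>z. complex_of_real (p v z) * g z) summable_on UNIV"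
    by (rule abs_summable_summable[OF L2_abs_summable_P[OF assms]])
  then show ?thesis unfolding Pop_def by (rule has_sum_infsum)
qed

lemma Pop_lincomb: assumes "f \<in> L2" "g \<in> L2"
  shows "Pop p (\<lambda>z. a * f z + b * g z) v = a * Pop p f v + b * Pop p g v"
proof -
  have "((\<lambda>z. a * (complex_of_real (p v z) * f z) + b * (complex_of_real (p v z) * g z))
          has_sum (a * Pop p f v + b * Pop p g v)) UNIV"
    by (intro has_sum_add has_sum_cmult_right L2_has_sum_P assms)
  then show ?thesis unfolding Pop_def by (intro infsumI) (simp add: algebra_simps)
qed

lemma green_L2: "(\<lambda>x. G x y) \<in> L2"
  using is_resolvent_resolvent delta_L2 unfolding is_resolvent_def green_eq_resolvent by blast

lemma green_equation: "lam * G v y - Pop p (\<lambda>x. G x y) v = delta y v"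
  using is_resolvent_resolvent delta_L2 unfolding is_resolvent_def green_eq_resolvent by (metis (no_types))

lemma green_has_sum: "((\<lambda>z. complex_of_real (p v z) * G z y) has_sum (lam * G v y - delta y v)) UNIV"
  using L2_has_sum_P[OF green_L2, of v y] green_equation[of v y] by (simp add: algebra_simps)

lemma L2_harmonic_off_point:
  assumes f: "f \<in> L2" and harm: "\<And>v. v \<noteq> x \<Longrightarrow> lam * f v = Pop p f v"
  shows "f v = (lam * f x - Pop p f x) * G v x"
proof -
  \<comment> \<open>\<open>\<lambda>I - P\<close> maps both \<open>f\<close> and \<open>c G(\<cdot>, x)\<close> to \<open>c \<delta>\<^sub>x\<close>, and it is injective on \<open>\<ell>\<^sup>2\<close>\<close>
  define c where "c = lam * f x - Pop p f x"
  define g where "g v = c * G v x" for v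
  have gL: "g \<in> L2" using L2_lincomb[OF green_L2 green_L2, of c x 0 x] unfolding g_def by simp
  have "Pop p g v = c * Pop p (\<lambda>z. G z x) v" for v
    using Pop_lincomb[OF green_L2 green_L2, of c x 0 x v] unfolding g_def by simp
  then have "(\<lambda>v. lam * g v - Pop p g v) = (\<lambda>v. c * delta x v)"
    using green_equation[of _ x] unfolding g_def by (auto simp: algebra_simps)
  moreover have "(\<lambda>v. lam * f v - Pop p f v) = (\<lambda>v. c * delta x v)"
    using harm unfolding delta_def c_def by auto
  moreover have "resolvent (\<lambda>v. lam * f v - Pop p f v) = f"
    and "resolvent (\<lambda>v. lam * g v - Pop p g v) = g"
    using is_resolvent_resolvent f gL unfolding is_resolvent_def by blast+
  ultimately have "f = g" by simp
  then have "f v = g v" by simp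
  then show ?thesis unfolding g_def c_def by simp
qed

lemma harmonic_restrict:
  assumes harm: "\<And>v. v \<in> B \<Longrightarrow> lam * F v = Pop p F v" and Fx: "F x = 0"
    and closed: "\<And>v w. v \<in> B \<Longrightarrow> E v w \<Longrightarrow> w \<in> B \<or> w = x" and "v \<noteq> x"
  shows "lam * (if v \<in> B then F v else 0) = Pop p (\<lambda>z. if z \<in> B then F z else 0) v"
proof (cases "v \<in> B")
  case True
  have agree: "complex_of_real (p v z) * (if z \<in> B then F z else 0) = complex_of_real (p v z) * F z" for z
  proof (cases "E v z")
    case True
    then have "z \<in> B \<or> z = x" using closed \<open>v \<in> B\<close> by blast
    then show ?thesis using Fx by auto
  qed (simp add: p_eq_0)
  have "Pop p (\<lambda>z. if z \<in> B then F z else 0) v = Pop p F v" by (simp only: Pop_def agree)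
  then show ?thesis using harm True by simp
next
  case False
  have vanish: "complex_of_real (p v z) * (if z \<in> B then F z else 0) = 0" for z
    using closed[of z v] p_eq_0[of v z] adj_sym[of v z] False \<open>v \<noteq> x\<close> by auto
  have "Pop p (\<lambda>z. if z \<in> B then F z else 0) v = 0" by (simp only: Pop_def vanish infsum_0)
  then show ?thesis using False by simp
qed

text \<open>The function \<open>G(x, x) G(\<cdot>, y) - G(x, y) G(\<cdot>, x)\<close>, cut down to \<open>B\<close>, is \<open>\<lambda>\<close>-harmonic off \<open>x\<close>
  and vanishes at \<open>x\<close>, hence vanishes.\<close>

lemma green_separation:
  assumes xB: "x \<notin> B" and closed: "\<And>v w. v \<in> B \<Longrightarrow> E v w \<Longrightarrow> w \<in> B \<or> w = x"
    and yB: "y \<notin> B" and vB: "v \<in> B"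
  shows "G v y * G x x = G v x * G x y"
proof -
  define F where "F z = G x x * G z y + (- G x y) * G z x" for z
  define f where "f z = (if z \<in> B then F z else 0)" for z
  have "F \<in> L2" unfolding F_def by (rule L2_lincomb[OF green_L2 green_L2])
  then have fL: "f \<in> L2" unfolding f_def by (rule L2_restrict)
  have "lam * F u = Pop p F u" if "u \<in> B" for u
  proof -
    have "u \<noteq> y" "u \<noteq> x" using that yB xB by auto
    then have Py: "Pop p (\<lambda>z. G z y) u = lam * G u y" and Px: "Pop p (\<lambda>z. G z x) u = lam * G u x"
      using green_equation[of u y] green_equation[of u x] unfolding delta_def by simp_all
    have "Pop p F u = G x x * Pop p (\<lambda>z. G z y) u + (- G x y) * Pop p (\<lambda>z. G z x) u"
      unfolding F_def by (rule Pop_lincomb[OF green_L2 green_L2])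
    also have "\<dots> = lam * F u" unfolding F_def Px Py by (simp add: algebra_simps)
    finally show ?thesis ..
  qed
  moreover have "F x = 0" unfolding F_def by (simp add: algebra_simps)
  ultimately have harm: "lam * f u = Pop p f u" if "u \<noteq> x" for u
    unfolding f_def by (rule harmonic_restrict[OF _ _ closed that])
  have multiple: "f z = (lam * f x - Pop p f x) * G z x" for z
    by (rule L2_harmonic_off_point[OF fL harm])
  have "f x = 0" unfolding f_def using xB by simp
  then have "lam * f x - Pop p f x = 0"
    using multiple[of x] green_diag_nonzero[of x] by (metis mult_eq_0_iff)
  then have "f v = 0" using multiple[of v] by (metis mult_zero_left)
  then show ?thesis unfolding f_def F_def using vB by (simp add: algebra_simps)
qed

lemma green_separation_child: assumes "u \<in> ch x" "y \<notin> sub u"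
  shows "G u y * G x x = G u x * G x y"
  using assms parent_notin_subtree[of u] in_subtree_self subtree_child_adj_closed
  by (intro green_separation[where B = "sub u"]) (auto simp: in_children_iff)

lemma green_separation_subtree: assumes "x \<noteq> rt" "v \<notin> sub x" "y \<in> sub x"
  shows "G v y * G x x = G v x * G x y"
  using assms in_subtree_self subtree_compl_adj_closed
  by (intro green_separation[where B = "- sub x"]) auto

text \<open>The first-step equation at \<open>x\<close> for \<open>G(\<cdot>,y)\<close> and \<open>G(\<cdot>,x)\<close>: all neighbours other than
  the child \<open>y\<close> cancel by \<open>green_separation\<close>.\<close>

lemma green_child_identity: assumes y: "y \<in> ch x"
  shows "complex_of_real (p x y) * (G x x * G y y - G x y * G y x) = G x y"
proof -
  define F where "F u = G x x * (complex_of_real (p x u) * G u y) + (- G x y) * (complex_of_real (p x u) * G u x)"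
    for u
  have "(F has_sum (G x x * (lam * G x y - delta y x) + (- G x y) * (lam * G x x - delta x x))) UNIV"
    unfolding F_def by (intro has_sum_add has_sum_cmult_right green_has_sum)
  moreover have "delta y x = 0" "delta x x = 1" using child_neq[OF y] unfolding delta_def by auto
  ultimately have "(F has_sum G x y) UNIV" by (simp add: algebra_simps)
  moreover have Fz: "F u = 0" if "u \<noteq> y" for u
  proof (cases "E x u")
    case False
    then show ?thesis unfolding F_def using p_eq_0 by simp
  next
    case True
    then consider "u \<in> ch x" | "x \<in> ch u" using adj_child_cases by blast
    then have "G u y * G x x = G u x * G x y"
    proof cases
      case 1
      then show ?thesis using green_separation_child sibling_notin_subtree y that by metis
    next
      case 2
      then show ?thesis
        using green_separation_subtree[of x u y] parent_notin_subtree child_in_subtree y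
        by (auto simp: in_children_iff)
    qed
    then show ?thesis unfolding F_def by (simp add: algebra_simps)
  qed
  have "(F has_sum F y) {y}" using has_sum_finite[of "{y}" F] by simp
  then have "(F has_sum F y) UNIV" by (rule has_sum_cong_neutral[THEN iffD1, rotated -1]) (use Fz in auto)
  ultimately have "F y = G x y" using has_sum_unique by blast
  then show ?thesis unfolding F_def by (simp add: algebra_simps)
qed

lemma green_child_nonzero: assumes "y \<in> ch x" shows "G x y \<noteq> 0"
proof
  assume "G x y = 0"
  then have "complex_of_real (p x y) * (G x x * G y y) = 0"
    using green_child_identity[OF assms] by simp
  moreover have "0 < p x y" using adj_child[OF assms] p_pos_iff by blast
  ultimately show False using green_diag_nonzero by simp
qed

lemma green_root_child: assumes "y \<in> ch x" shows "G rt y * G x x = G rt x * G x y"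
proof (cases "x = rt")
  case True
  then show ?thesis by (simp add: mult.commute)
next
  case False
  then show ?thesis
    using green_separation_subtree[of x rt y] root_notin_subtree child_in_subtree assms by blast
qed

lemma green_root_nonzero: "G rt x \<noteq> 0"
proof (induction "length (geo x)" arbitrary: x rule: less_induct)
  case less
  show ?case
  proof (cases "x = rt")
    case True
    then show ?thesis using green_diag_nonzero by simp
  next
    case False
    then have "x \<in> ch (par x)" by (rule parent_children)
    then have "G rt (par x) \<noteq> 0" using less length_geo_child by simp
    then show ?thesis
      using green_root_child[OF \<open>x \<in> ch (par x)\<close>] green_child_nonzero[OF \<open>x \<in> ch (par x)\<close>]
        green_diag_nonzero[of "par x"] by auto
  qed
qed

text \<open>For \<open>w \<in> \<pi>(o, x)\<close> the confluent \<open>x \<and> w\<close> is \<open>w\<close>, so \<open>K(x, w) = G(x, w) / G(o, w)\<close>.\<close>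

definition K :: "'v \<Rightarrow> 'v \<Rightarrow> complex" where
  "K x w = G x w / G rt w"

lemma K_has_sum: "((\<lambda>v. complex_of_real (p x v) * K v w) has_sum ((lam * G x w - delta w x) / G rt w)) UNIV"
  using has_sum_cmult_right[OF green_has_sum, of "1 / G rt w" x w] unfolding K_def by (simp add: field_simps)

lemma K_child_jump: assumes "y \<in> ch x"
  shows "complex_of_real (p x y) * (K y y - K y x) = 1 / G rt x"
proof -
  have nz: "G rt x \<noteq> 0" "G x y \<noteq> 0" "G x x \<noteq> 0"
    using green_root_nonzero green_child_nonzero[OF assms] green_diag_nonzero by auto
  have root: "G rt y = G rt x * G x y / G x x" using green_root_child[OF assms] nz by (simp add: field_simps)
  have "complex_of_real (p x y) * (G y y / G rt y)
      = complex_of_real (p x y) * (G x x * G y y) / (G rt x * G x y)"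
    unfolding root using nz by (simp add: field_simps)
  also have "\<dots> = (G x y + complex_of_real (p x y) * G x y * G y x) / (G rt x * G x y)"
    using green_child_identity[OF assms] by (simp add: algebra_simps)
  also have "\<dots> = 1 / G rt x + complex_of_real (p x y) * (G y x / G rt x)"
    using nz by (simp add: field_simps)
  finally show ?thesis unfolding K_def by (simp add: algebra_simps)
qed

lemma K_parent: assumes "x \<noteq> rt" shows "K (par x) x = K (par x) (par x)"
  using green_root_child[OF parent_children[OF assms]] green_root_nonzero[of x] green_root_nonzero[of "par x"]
  unfolding K_def by (simp add: field_simps)

end

section \<open>Harmonicity of the integral\<close>

lemma has_sum_sum:
  fixes f :: "'i \<Rightarrow> 'a \<Rightarrow> 'b::topological_comm_monoid_add"
  assumes "finite I" "\<And>i. i \<in> I \<Longrightarrow> (f i has_sum s i) A"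
  shows "((\<lambda>x. \<Sum>i\<in>I. f i x) has_sum (\<Sum>i\<in>I. s i)) A"
  using assms by (induction I rule: finite_induct) (auto intro: has_sum_add)

lemma sum_by_parts_nat:
  fixes a b :: "nat \<Rightarrow> 'a::comm_ring"
  shows "(\<Sum>i<k. a i * (b i - b (Suc i))) + a k * b k = a 0 * b 0 + (\<Sum>i\<in>{1..k}. (a i - a (i - 1)) * b i)"
  by (induction k) (simp_all add: algebra_simps)

locale martin_integral = green_tree E rt p lam + tree_distribution E rt \<nu>
  for E :: "'v \<Rightarrow> 'v \<Rightarrow> bool" and rt p lam \<nu>
begin

text \<open>The geodesic formula for \<open>h(x)\<close>, with \<open>\<pi>(o, x)\<close> kept fixed and the first argument of the
  kernel set free.\<close>

definition kernel_sum :: "'v \<Rightarrow> 'v \<Rightarrow> complex" where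
  "kernel_sum x v = (\<Sum>i<length (geo x) - 1. K v (geo x ! i) * (\<nu> (bd (geo x ! i)) - \<nu> (bd (geo x ! Suc i))))
     + K v x * \<nu> (bd x)"

lemma Kv_geo_nth: "i < length (geo z) \<Longrightarrow> Kv E p rt lam z (geo z ! i) = K z (geo z ! i)"
  unfolding Kv_def K_def using confv_geo_nth by simp

lemma Kv_self: "Kv E p rt lam z z = K z z"
  using Kv_geo_nth[of "length (geo z) - 1" z] geo_nth_last[of z] length_geo_pos[of z] by simp

lemma bint_Ke_geo:
  "bint E rt (Ke E p rt lam z) \<nu> =
    (\<Sum>i<length (geo z) - 1. Kv E p rt lam z (geo z ! i) * (\<nu> (bd (geo z ! i)) - \<nu> (bd (geo z ! Suc i))))
     + Kv E p rt lam z z * \<nu> (bd z)"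
proof -
  have "loc_const_wit E rt (Ke E p rt lam z) (set (geo z)) (Kv E p rt lam z)"
    using loc_const_wit_kernel_geo[of "green E p rt lam" z] unfolding Ke_def Kv_def by simp
  then show ?thesis using bint_eq_step_sum step_sum_geo by simp
qed

lemma bint_Ke_eq_kernel_sum: "bint E rt (Ke E p rt lam z) \<nu> = kernel_sum z z"
  unfolding bint_Ke_geo kernel_sum_def Kv_self
  by (intro arg_cong2[where f = "(+)"] sum.cong refl) (simp add: Kv_geo_nth)

lemma bint_Ke_by_parts:
  "bint E rt (Ke E p rt lam z) \<nu> = Kv E p rt lam z rt * \<nu> (bd rt) + (\<Sum>i\<in>{1..length (geo z) - 1}.
     (Kv E p rt lam z (geo z ! i) - Kv E p rt lam z (geo z ! (i - 1))) * \<nu> (bd (geo z ! i)))"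
  using bint_Ke_geo[of z] geo_nth_0[of z] geo_nth_last[of z]
    sum_by_parts_nat[of "\<lambda>i. Kv E p rt lam z (geo z ! i)" "\<lambda>i. \<nu> (bd (geo z ! i))" "length (geo z) - 1"]
  by simp

text \<open>Each \<open>K(\<cdot>, w) = G(\<cdot>, w) / G(o, w)\<close> is \<open>\<lambda>\<close>-harmonic except at \<open>w\<close>; among the vertices of
  \<open>\<pi>(o, x)\<close>, only \<open>w = x\<close> contributes a defect at \<open>x\<close>.\<close>



lemma kernel_sum_has_sum:
  "((\<lambda>v. complex_of_real (p x v) * kernel_sum x v) has_sum (lam * kernel_sum x x - \<nu> (bd x) / G rt x)) UNIV"
proof -
  define xs where "xs = geo x"
  define k where "k = length xs - 1"
  define d where "d i = \<nu> (bd (xs ! i)) - \<nu> (bd (xs ! Suc i))" for i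
  have xk: "xs ! k = x" using geo_nth_last[of x] unfolding k_def xs_def by simp
  have "((\<lambda>v. complex_of_real (p x v) * K v (xs ! i)) has_sum (lam * K x (xs ! i))) UNIV" if "i < k" for i
  proof -
    have "xs ! i \<noteq> xs ! k"
      using geo_distinct[of x] that length_geo_pos[of x] unfolding xs_def k_def by (simp add: nth_eq_iff_index_eq)
    then have "delta (xs ! i) x = 0" using xk unfolding delta_def by simp
    then show ?thesis using K_has_sum[of x "xs ! i"] unfolding K_def by simp
  qed
  then have s1: "((\<lambda>v. \<Sum>i<k. d i * (complex_of_real (p x v) * K v (xs ! i)))
      has_sum (\<Sum>i<k. d i * (lam * K x (xs ! i)))) UNIV"
    by (intro has_sum_sum has_sum_cmult_right) auto
  have s2: "((\<lambda>v. \<nu> (bd x) * (complex_of_real (p x v) * K v x))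
      has_sum (\<nu> (bd x) * ((lam * G x x - 1) / G rt x))) UNIV"
    using K_has_sum[of x x] unfolding delta_def by (intro has_sum_cmult_right) simp
  have expand: "complex_of_real (p x v) * kernel_sum x v
      = (\<Sum>i<k. d i * (complex_of_real (p x v) * K v (xs ! i))) + \<nu> (bd x) * (complex_of_real (p x v) * K v x)"
    for v unfolding kernel_sum_def xs_def[symmetric] k_def[symmetric] d_def[symmetric]
    by (simp add: algebra_simps sum_distrib_left)
  have "((\<lambda>v. complex_of_real (p x v) * kernel_sum x v) has_sum
      ((\<Sum>i<k. d i * (lam * K x (xs ! i))) + \<nu> (bd x) * ((lam * G x x - 1) / G rt x))) UNIV"
    unfolding expand by (rule has_sum_add[OF s1 s2])
  moreover have "(\<Sum>i<k. d i * (lam * K x (xs ! i))) + \<nu> (bd x) * ((lam * G x x - 1) / G rt x)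
      = lam * kernel_sum x x - \<nu> (bd x) / G rt x"
    unfolding kernel_sum_def xs_def[symmetric] k_def[symmetric] d_def[symmetric] K_def
    using green_root_nonzero[of x] by (simp add: algebra_simps sum_distrib_left diff_divide_distrib)
  ultimately show ?thesis by simp
qed

lemma kernel_sum_child: assumes "y \<in> ch x"
  shows "kernel_sum y y = kernel_sum x y + (K y y - K y x) * \<nu> (bd y)"
proof -
  define xs where "xs = geo x"
  define k where "k = length xs - 1"
  have gy: "geo y = xs @ [y]" using geo_child[OF assms] xs_def by simp
  have lx: "length xs = Suc k" using length_geo_pos[of x] unfolding k_def xs_def by simp
  have "xs ! k = x" using geo_nth_last[of x] unfolding k_def xs_def by simp
  then have "kernel_sum y y = (\<Sum>i<k. K y (xs ! i) * (\<nu> (bd (xs ! i)) - \<nu> (bd (xs ! Suc i))))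
      + K y x * (\<nu> (bd x) - \<nu> (bd y)) + K y y * \<nu> (bd y)"
    unfolding kernel_sum_def gy using lx by (simp add: nth_append)
  also have "\<dots> = kernel_sum x y + (K y y - K y x) * \<nu> (bd y)"
    unfolding kernel_sum_def xs_def[symmetric] k_def[symmetric] by (simp add: algebra_simps)
  finally show ?thesis .
qed

lemma kernel_sum_parent: assumes "x \<noteq> rt"
  shows "kernel_sum (par x) (par x) = kernel_sum x (par x)"
proof -
  define v where "v = par x"
  define j where "j = length (geo v) - 1"
  have gx: "geo x = geo v @ [x]" using geo_parent(1)[OF assms] v_def by simp
  have lv: "length (geo v) = Suc j" using length_geo_pos[of v] unfolding j_def by simp
  have vj: "geo v ! j = v" using geo_nth_last[of v] unfolding j_def by simp
  have "kernel_sum x v = (\<Sum>i<j. K v (geo v ! i) * (\<nu> (bd (geo v ! i)) - \<nu> (bd (geo v ! Suc i))))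
      + K v v * (\<nu> (bd v) - \<nu> (bd x)) + K v x * \<nu> (bd x)"
    unfolding kernel_sum_def gx using lv vj by (simp add: nth_append)
  also have "K v x = K v v" using K_parent[OF assms] v_def by simp
  finally show ?thesis unfolding kernel_sum_def v_def[symmetric] j_def[symmetric]
    by (simp add: algebra_simps)
qed

text \<open>Applying \<open>P\<close> at \<open>x\<close>: \<open>h\<close> agrees with \<open>kernel_sum x\<close> on all neighbours except the children,
  where the jumps add up to \<open>\<nu>(\<partial>T\<^sub>x) / G(o, x)\<close>, cancelling the defect of \<open>kernel_sum x\<close>.\<close>

lemma kernel_sum_harmonic: "((\<lambda>v. complex_of_real (p x v) * kernel_sum v v) has_sum (lam * kernel_sum x x)) UNIV"
proof -
  have split: "complex_of_real (p x v) * kernel_sum v v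
      = complex_of_real (p x v) * kernel_sum x v + (if v \<in> ch x then \<nu> (bd v) / G rt x else 0)" for v
  proof (cases "E x v")
    case False
    then show ?thesis using p_eq_0 adj_child by auto
  next
    case True
    then consider "v \<in> ch x" | "x \<in> ch v" using adj_child_cases by blast
    then show ?thesis
    proof cases
      case 1
      have "complex_of_real (p x v) * kernel_sum v v = complex_of_real (p x v) * kernel_sum x v
          + complex_of_real (p x v) * (K v v - K v x) * \<nu> (bd v)"
        unfolding kernel_sum_child[OF 1] by (simp add: algebra_simps)
      then show ?thesis unfolding K_child_jump[OF 1] using 1 by simp
    next
      case 2
      then have "x \<noteq> rt" "v = par x" by (simp_all add: in_children_iff)
      moreover have "v \<notin> ch x"
      proof
        assume "v \<in> ch x"
        then show False using length_geo_child[OF 2] length_geo_child[of v x] by simp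
      qed
      ultimately show ?thesis using kernel_sum_parent[of x] by simp
    qed
  qed
  have "((\<lambda>v. \<nu> (bd v) / G rt x) has_sum (\<nu> (bd x) / G rt x)) (ch x)"
    using distribution has_sum_divide_const unfolding is_cdist_def by blast
  then have "((\<lambda>v. if v \<in> ch x then \<nu> (bd v) / G rt x else 0) has_sum (\<nu> (bd x) / G rt x)) UNIV"
    by (rule has_sum_cong_neutral[THEN iffD1, rotated -1]) auto
  with kernel_sum_has_sum[of x] have "((\<lambda>v. complex_of_real (p x v) * kernel_sum v v)
      has_sum (lam * kernel_sum x x - \<nu> (bd x) / G rt x + \<nu> (bd x) / G rt x)) UNIV"
    unfolding split by (rule has_sum_add)
  then show ?thesis by simp
qed

end

theorem proposition3p1:
  fixes E :: "'v::countable \<Rightarrow> 'v \<Rightarrow> bool" and p :: "'v \<Rightarrow> 'v \<Rightarrow> real" and rt :: 'v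
    and lam :: complex and \<nu> :: "(nat \<Rightarrow> 'v) set set \<Rightarrow> complex" and h :: "'v \<Rightarrow> complex"
  assumes "is_tree E" and "no_leaves E" and "stochastic_nn E p"
    and "lam \<in> res_star E p rt" and "is_cdist E rt \<nu>"
    and "\<And>x. h x = bint E rt (\<lambda>\<xi>. Ke E p rt lam x \<xi>) \<nu>"
  shows "(\<forall>x. ((\<lambda>y. norm (complex_of_real (p x y) * h y)) summable_on UNIV) \<and>
             HAS_SUM (\<lambda>y. complex_of_real (p x y) * h y) UNIV (lam * h x)) \<and>
         (\<forall>x. let xs = geod E rt x; k = length xs - 1 in
           h x = (\<Sum>i<k. Kv E p rt lam x (xs!i) *
                     (\<nu> (bdry_at E rt (xs!i)) - \<nu> (bdry_at E rt (xs!Suc i))))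
                 + Kv E p rt lam x x * \<nu> (bdry_at E rt x)
         \<and> h x = Kv E p rt lam x rt * \<nu> (bdry_at E rt rt)
                 + (\<Sum>i\<in>{1..k}. (Kv E p rt lam x (xs!i) - Kv E p rt lam x (xs!(i-1))) *
                     \<nu> (bdry_at E rt (xs!i))))"
proof -
  interpret rooted_tree E rt by (rule rooted_tree.intro) (fact assms(1))
  interpret green_tree E rt p lam using assms(3,4) by unfold_locales
  interpret martin_integral E rt p lam \<nu>
    using assms(5) no_leaves_children_nonempty[OF exists_adj assms(2)] by unfold_locales
  have harmonic: "((\<lambda>y. complex_of_real (p x y) * bint E rt (Ke E p rt lam y) \<nu>)
      has_sum (lam * bint E rt (Ke E p rt lam x) \<nu>)) UNIV" for x
    unfolding bint_Ke_eq_kernel_sum by (rule kernel_sum_harmonic)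
  have summable:
    "(\<lambda>y. norm (complex_of_real (p x y) * bint E rt (Ke E p rt lam y) \<nu>)) summable_on UNIV" for x
    using harmonic[of x] by (rule summable_on_iff_abs_summable_on_complex[THEN iffD1, OF has_sum_imp_summable])
  show ?thesis
    unfolding Let_def assms(6) by (intro conjI allI harmonic summable bint_Ke_geo bint_Ke_by_parts)
qed

end
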